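(* Consider the quadratic Klein–Gordon equation $$\partial_t^2u-\partial_x^2u+mu=Q_{00}(u_t,u_t)+Q_{01}(u_t,u)+Q_{11}(u,u),$$ where $Q_{00},Q_{01},Q_{11}$ are translation-invariant bilinear forms with symbols $q_{00}\in\mathrm{span}\{1,\,i(\xi_1+\xi_2)\}$, $q_{01}\in\mathrm{span}\{1,i\xi_1,i\xi_2,\xi_1\xi_2,\xi_2^2\}$, $q_{11}\in\mathrm{span}\{1,\,i(\xi_1+\xi_2),\,\xi_1\xi_2,\,\xi_1^2+\xi_2^2,\,i(\xi_1^2\xi_2+\xi_1\xi_2^2)\}$, with $q_{00},q_{11}$ symmetric in $(\xi_1,\xi_2)$, all mapping real-valued functions to real-valued functions. Then there exists a unique normal form transformation $$\mathbf u=u+A(u,u)+B(u_t,u_t)+C(u_t,u),$$ with $A,B,C$ translation-invariant bilinear forms mapping real functions to real functions (with $A$, $B$ having symmetric symbols), such that $$-\Lambda_2\big(L_{KG}(A(u,u)+B(u_t,u_t)+C(u_t,u))\big)=Q_{00}(u_t,u_t)+Q_{01}(u_t,u)+Q_{11}(u,u).$$ Moreover, with $a,b,c$ the symbols of $A,B,C$: (i) In the low–high region $|\xi_1|\le c_0|\xi_2|$ (for a fixed small $c_0>0$) one has $a(\xi_1,\xi_2)=a_0(\xi_1)\xi_2+a_1(\xi_1)+O((1+|\xi_1|^4)\xi_2^{-1})$ with $a_0\in S^2$, $a_1\in S^3$; $b(\xi_1,\xi_2)=b_0(\xi_1)+b_1(\xi_1)\xi_2^{-1}+O((1+|\xi_1|^3)\xi_2^{-2})$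 with $b_0\in S^1$, $b_1\in S^2$; $c(\xi_1,\xi_2)=c^1_0(\xi_1)\xi_2+c^1_1(\xi_1)+O((1+|\xi_1|^3)\xi_2^{-1})$ with $c^1_0\in S^1$, $c^1_1\in S^2$; and in the high–low region $|\xi_2|\le c_0|\xi_1|$, $c(\xi_1,\xi_2)=c^2_0(\xi_2)+c^2_1(\xi_2)\xi_1^{-1}+O((1+|\xi_2|^4)\xi_1^{-2})$ with $c^2_0\in S^2$, $c^2_1\in S^3$. (ii) For the high–high parts $a_{hh}=\chi_{hh}a$, $b_{hh}=\chi_{hh}b$, $c_{hh}=\chi_{hh}c$ there are decompositions $a_{hh}=(\xi_1+\xi_2)\tilde a_{hh}+a^{(0)}_{hh}$, $b_{hh}=(\xi_1+\xi_2)\tilde b_{hh}+b^{(0)}_{hh}$, $c_{hh}=(\xi_1+\xi_2)\tilde c_{hh}+c^{(0)}_{hh}$ with $\tilde a_{hh},a^{(0)}_{hh}\in S^2$, $\tilde b_{hh},b^{(0)}_{hh}\in S^0$, $\tilde c_{hh},c^{(0)}_{hh}\in S^1$.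
   Context: $m>0$, $L_{KG}:=\partial_t^2-\partial_x^2+m$. A translation-invariant bilinear form $B$ with symbol $b(\eta,\xi)$ acts by $\widehat{B(f,g)}(\zeta)=\int_{\xi+\eta=\zeta}b(\eta,\xi)\hat f(\eta)\hat g(\xi)\,d\xi$ (so $\xi_1$ is the frequency of the first argument, $\xi_2$ of the second). It maps real functions to real functions iff $b(-\xi_1,-\xi_2)=\overline{b(\xi_1,\xi_2)}$. $\Lambda_2$ keeps only the terms that are exactly quadratic in $u$ after all second time derivatives $u_{tt}$ (and those of $u_t$) are eliminated using the equation; equivalently, the identity holds for all solutions of the linear equation $L_{KG}u=0$. One-variable class $S^n$: $|\partial^k_\xi a(\xi)|\lesssim_k\langle\xi\rangle^{n-k}$. Bilinear class $S^n$: $|\partial^{\alpha_1}_{\xi_1}\partial^{\alpha_2}_{\xi_2}m(\xi_1,\xi_2)|\lesssim_\alpha\langle\xi\rangle^{n-|\alpha|}$, $\xi=(\xi_1,\xi_2)$. $\chi_{hh}(\xi_1,\xi_2)$ is a smooth nonnegative cutoff (smooth on the dyadic scale) equal to $1$ when $\frac1{10}\le\langle\xi_1\rangle/\langle\xi_2\rangle\le10$ and $0$ when $\langle\xi_1\rangle\le\frac1{20}\langle\xi_2\rangle$ or $\langle\xi_2\rangle\le\frac1{20}\langle\xi_1\rangle$. *)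

theory Defs
  imports "HOL-Analysis.Analysis"
begin

text \<open>A translation-invariant bilinear form is identified with its symbol
  b(xi1,xi2): xi1 is the frequency of the first argument, xi2 of the second.\<close>
type_synonym symb = "real \<Rightarrow> real \<Rightarrow> complex"

text \<open>A quadratic expression in u and its time derivatives:
  E j k is the symbol of the term S(d_t^j u, d_t^k u); the expression is
  the (finite) sum over all j, k of these terms.\<close>
type_synonym qexpr = "nat \<Rightarrow> nat \<Rightarrow> symb"

definition qe_zero :: qexpr where "qe_zero = (\<lambda>j k x y. 0)"

definition qe_neg :: "qexpr \<Rightarrow> qexpr" where
  "qe_neg E = (\<lambda>j k x y. - E j k x y)"

text \<open>Time derivative (Leibniz rule):
  d_t S(d_t^j u, d_t^k u) = S(d_t^(j+1) u, d_t^k u) + S(d_t^j u, d_t^(k+1) u).\<close>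
definition qe_dt :: "qexpr \<Rightarrow> qexpr" where
  "qe_dt E = (\<lambda>j k x y. (if 0 < j then E (j - 1) k x y else 0)
                       + (if 0 < k then E j (k - 1) x y else 0))"

text \<open>L_KG = d_t^2 - d_x^2 + m; the output frequency is xi1 + xi2, so
  -d_x^2 + m acts by multiplication with (xi1+xi2)^2 + m.\<close>
definition qe_LKG :: "real \<Rightarrow> qexpr \<Rightarrow> qexpr" where
  "qe_LKG m E = (\<lambda>j k x y. qe_dt (qe_dt E) j k x y
                         + complex_of_real ((x + y)^2 + m) * E j k x y)"

text \<open>Lambda_2 with elimination of higher time derivatives via the linear
  equation u_tt = u_xx - m u, i.e. d_t^j u has Fourier multiplier
  (-(xi^2+m))^(j div 2) times d_t^(j mod 2) u.  N is a bound on the time-derivative orders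
  occurring in E (terms with j > N or k > N are assumed absent).\<close>
definition qe_Lambda2 :: "real \<Rightarrow> nat \<Rightarrow> qexpr \<Rightarrow> qexpr" where
  "qe_Lambda2 m N E = (\<lambda>r s x y.
     if r \<le> 1 \<and> s \<le> 1 then
       (\<Sum>j\<le>N. \<Sum>k\<le>N. if j mod 2 = r \<and> k mod 2 = s
          then E j k x y * complex_of_real ((- (x^2 + m)) ^ (j div 2))
                         * complex_of_real ((- (y^2 + m)) ^ (k div 2))
          else 0)
     else 0)"

text \<open>Equality of two reduced quadratic expressions (entries only for
  j,k in {0,1}) as quadratic functionals of the (arbitrary, independent)
  data u, u_t: the (u,u) and (u_t,u_t) parts only see the symmetrised
  symbol, and a term S(u, u_t) equals the term S'(u_t, u) with swapped
  symbol S'(xi1,xi2) = S(xi2,xi1).\<close>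
definition qe_equiv :: "qexpr \<Rightarrow> qexpr \<Rightarrow> bool" where
  "qe_equiv R R' \<longleftrightarrow> (\<forall>x y.
      R 0 0 x y + R 0 0 y x = R' 0 0 x y + R' 0 0 y x
    \<and> R 1 1 x y + R 1 1 y x = R' 1 1 x y + R' 1 1 y x
    \<and> R 1 0 x y + R 0 1 y x = R' 1 0 x y + R' 0 1 y x)"

definition nf_expr :: "symb \<Rightarrow> symb \<Rightarrow> symb \<Rightarrow> qexpr" where
  "nf_expr a b c = (\<lambda>j k. if j = 0 \<and> k = 0 then a
                          else if j = 1 \<and> k = 1 then b
                          else if j = 1 \<and> k = 0 then c
                          else (\<lambda>x y. 0))"

text \<open>The right-hand side Q00(u_t,u_t) + Q01(u_t,u) + Q11(u,u).\<close>
definition rhs_expr :: "symb \<Rightarrow> symb \<Rightarrow> symb \<Rightarrow> qexpr" where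
  "rhs_expr q00 q01 q11 = nf_expr q11 q00 q01"

definition sym_symb :: "symb \<Rightarrow> bool" where
  "sym_symb p \<longleftrightarrow> (\<forall>x y. p x y = p y x)"

text \<open>The bilinear form maps real functions to real functions.\<close>
definition real_symb :: "symb \<Rightarrow> bool" where
  "real_symb p \<longleftrightarrow> (\<forall>x y. p (- x) (- y) = cnj (p x y))"

text \<open>A, B, C define a normal form transformation for the given quadratic
  nonlinearity: A, B symmetric, all real, and
  -Lambda_2(L_KG(A(u,u)+B(u_t,u_t)+C(u_t,u))) = Q00(u_t,u_t)+Q01(u_t,u)+Q11(u,u).
  (The time-derivative orders in L_KG applied to nf_expr are at most 3.)\<close>
definition is_normal_form :: "real \<Rightarrow> symb \<Rightarrow> symb \<Rightarrow> symb \<Rightarrow> symb \<Rightarrow> symb \<Rightarrow> symb \<Rightarrow> bool" where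
  "is_normal_form m q00 q01 q11 a b c \<longleftrightarrow>
     sym_symb a \<and> sym_symb b \<and> real_symb a \<and> real_symb b \<and> real_symb c \<and>
     qe_equiv (qe_neg (qe_Lambda2 m 3 (qe_LKG m (nf_expr a b c))))
              (rhs_expr q00 q01 q11)"

definition jbr1 :: "real \<Rightarrow> real" where "jbr1 x = sqrt (1 + x^2)"
definition jbr2 :: "real \<Rightarrow> real \<Rightarrow> real" where "jbr2 x y = sqrt (1 + x^2 + y^2)"

definition S1 :: "real \<Rightarrow> (real \<Rightarrow> complex) \<Rightarrow> bool" where
  "S1 n f \<longleftrightarrow> (\<exists>D :: nat \<Rightarrow> real \<Rightarrow> complex. D 0 = f \<and>
     (\<forall>k x. (D k has_vector_derivative D (Suc k) x) (at x)) \<and>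
     (\<forall>k. \<exists>C. \<forall>x. norm (D k x) \<le> C * jbr1 x powr (n - real k)))"

definition S2 :: "real \<Rightarrow> symb \<Rightarrow> bool" where
  "S2 n f \<longleftrightarrow> (\<exists>D :: nat \<Rightarrow> nat \<Rightarrow> symb. D 0 0 = f \<and>
     (\<forall>i j x y. ((\<lambda>t. D i j t y) has_vector_derivative D (Suc i) j x y) (at x)) \<and>
     (\<forall>i j x y. ((\<lambda>t. D i j x t) has_vector_derivative D i (Suc j) x y) (at y)) \<and>
     (\<forall>i j. \<exists>C. \<forall>x y. norm (D i j x y) \<le> C * jbr2 x y powr (n - real (i + j))))"

definition is_chi_hh :: "(real \<Rightarrow> real \<Rightarrow> real) \<Rightarrow> bool" where
  "is_chi_hh chi \<longleftrightarrow> S2 0 (\<lambda>x y. complex_of_real (chi x y)) \<and>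
     (\<forall>x y. 0 \<le> chi x y) \<and>
     (\<forall>x y. 1/10 \<le> jbr1 x / jbr1 y \<and> jbr1 x / jbr1 y \<le> 10 \<longrightarrow> chi x y = 1) \<and>
     (\<forall>x y. jbr1 x \<le> jbr1 y / 20 \<or> jbr1 y \<le> jbr1 x / 20 \<longrightarrow> chi x y = 0)"

end

(*
  Applying L_KG to A(u,u) + B(u_t,u_t) + C(u_t,u) and eliminating u_tt by the linear equation
  turns the normal form equation into pointwise linear systems for the symbols: a 2x2 system for
  (a, b), and one coupling c(xi1,xi2) with c(xi2,xi1). Both have the determinant
  D = (2 xi1 xi2 - m)^2 - 4 (xi1^2 + m)(xi2^2 + m) = -(4m (xi1^2 + xi1 xi2 + xi2^2) + 3m^2),
  which is bounded below by a multiple of <xi>^2. Cramer's rule therefore gives existence and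
  uniqueness, with a, b, c = N/D for polynomials N.

  In the low-high region, long division of N by D in the high frequency gives the expansion; the
  remainder is linear in that frequency, so the remainder term is O(1/xi) by ellipticity of D.
  In the high-high region, the restriction R(xi1) = N(xi1,-xi1) loses one degree (the odd terms
  i(xi1+xi2) vanish), and N - R = (xi1+xi2) Q; then chi a = (xi1+xi2) chi Q/D + chi R/D. Symbol
  class estimates for such rational expressions in xi and the cutoff are obtained from a small
  calculus of symbol expressions that is closed under differentiation.
*)
theory Submission
  imports Defs "HOL-Computational_Algebra.Polynomial"
begin

section \<open>The normal form equation as a pointwise linear system\<close>

lemma nf_expr_simps [simp]:
  "nf_expr a b c 0 0 = a" "nf_expr a b c 1 1 = b" "nf_expr a b c 1 0 = c"
  "nf_expr a b c 0 1 = (\<lambda>x y. 0)"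
  unfolding nf_expr_def by auto

lemma Lambda2_LKG_nf_expr:
  shows "qe_Lambda2 m 3 (qe_LKG m (nf_expr a b c)) 0 0 x y
           = a x y * of_real (2*x*y - m) + 2 * b x y * of_real ((x^2+m) * (y^2+m))"
    and "qe_Lambda2 m 3 (qe_LKG m (nf_expr a b c)) 1 1 x y
           = b x y * of_real (2*x*y - m) + 2 * a x y"
    and "qe_Lambda2 m 3 (qe_LKG m (nf_expr a b c)) 1 0 x y = c x y * of_real (2*x*y - m)"
    and "qe_Lambda2 m 3 (qe_LKG m (nf_expr a b c)) 0 1 x y = - 2 * of_real (x^2+m) * c x y"
  unfolding qe_Lambda2_def qe_LKG_def qe_dt_def nf_expr_def
  by (simp_all add: numeral_3_eq_3 algebra_simps power2_eq_square)

lemma normal_form_equation_iff: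
  assumes "sym_symb a" "sym_symb b" "sym_symb q00" "sym_symb q11"
  shows "qe_equiv (qe_neg (qe_Lambda2 m 3 (qe_LKG m (nf_expr a b c)))) (rhs_expr q00 q01 q11)
     \<longleftrightarrow> (\<forall>x y. a x y * of_real (2*x*y - m) + 2 * b x y * of_real ((x^2+m) * (y^2+m)) = - q11 x y
              \<and> b x y * of_real (2*x*y - m) + 2 * a x y = - q00 x y
              \<and> c x y * of_real (2*x*y - m) - 2 * of_real (y^2+m) * c y x = - q01 x y)"
proof -
  have swap: "a y x = a x y" "b y x = b x y" "q00 y x = q00 x y" "q11 y x = q11 x y" for x y
    using assms unfolding sym_symb_def by metis+
  have comm: "2*y*x - m = 2*x*y - m" "(y^2+m) * (x^2+m) = (x^2+m) * (y^2+m)" for x y :: real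
    by (simp_all add: algebra_simps)
  have doubled: "- E + - E = q + q \<longleftrightarrow> E = - q" for E q :: complex
    by (auto simp: algebra_simps)
  have cross: "- (C * p) + - (- 2 * w * C') = q + 0 \<longleftrightarrow> C * p - 2 * w * C' = - q"
    for C C' p w q :: complex
    by (auto simp: algebra_simps)
  show ?thesis
    unfolding qe_equiv_def qe_neg_def rhs_expr_def Lambda2_LKG_nf_expr nf_expr_simps
    by (simp only: swap comm doubled cross)
qed

(* The determinant of both pointwise systems: for (a, b) and for (c(xi1,xi2), c(xi2,xi1)). *)
definition nf_det :: "real \<Rightarrow> real \<Rightarrow> real \<Rightarrow> real" where
  "nf_det m x y = (2*x*y - m)^2 - 4 * ((x^2+m) * (y^2+m))"

lemma nf_det_eq: "nf_det m x y = - (4*m*(x^2 + x*y + y^2) + 3*m^2)"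
  unfolding nf_det_def by (simp add: power2_eq_square algebra_simps)

lemma nf_det_commute: "nf_det m y x = nf_det m x y"
  unfolding nf_det_eq by (simp add: algebra_simps)

lemma nf_det_minus: "nf_det m (-x) (-y) = nf_det m x y"
  unfolding nf_det_eq by simp

lemma nf_det_bound:
  assumes "0 < m"
  shows "min (2*m) (3*m^2) * (1 + x^2 + y^2) \<le> \<bar>nf_det m x y\<bar>"
proof -
  have "- nf_det m x y = 2*m*(x^2 + y^2) + 2*m*(x+y)^2 + 3*m^2"
    unfolding nf_det_eq by (simp add: power2_eq_square algebra_simps)
  moreover have "0 \<le> 2*m*(x^2 + y^2) + 2*m*(x+y)^2" "0 < 3*m^2"
    using assms by simp_all
  ultimately have "\<bar>nf_det m x y\<bar> = 2*m*(x^2 + y^2) + 2*m*(x+y)^2 + 3*m^2"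
    by linarith
  moreover have "min (2*m) (3*m^2) * (x^2 + y^2) \<le> 2*m*(x^2 + y^2)"
    by (intro mult_right_mono) auto
  moreover have "min (2*m) (3*m^2) * (1 + x^2 + y^2) = min (2*m) (3*m^2) + min (2*m) (3*m^2) * (x^2 + y^2)"
    by (simp add: algebra_simps)
  moreover have "0 \<le> 2*m*(x+y)^2" "min (2*m) (3*m^2) \<le> 3*m^2"
    using assms by simp_all
  ultimately show ?thesis
    by linarith
qed

lemma nf_det_nonzero:
  assumes "0 < m"
  shows "nf_det m x y \<noteq> 0"
proof -
  have "0 < min (2*m) (3*m^2) * (1 + x^2 + y^2)"
    using assms by (intro mult_pos_pos) (auto simp: add_pos_nonneg)
  then show ?thesis
    using nf_det_bound[OF assms, of x y] by auto
qed

lemma cramer_ab: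
  fixes a b p P u v D :: complex
  assumes "D \<noteq> 0" "D = p^2 - 4*P"
  shows "a * p + 2 * b * P = - u \<and> b * p + 2 * a = - v
     \<longleftrightarrow> a = (2*P * v - p * u) / D \<and> b = (2*u - p * v) / D"
proof
  assume "a * p + 2 * b * P = - u \<and> b * p + 2 * a = - v"
  then have u: "u = - (a * p + 2 * b * P)" and v: "v = - (b * p + 2 * a)"
    by auto
  have "a * D = 2*P * v - p * u" "b * D = 2*u - p * v"
    unfolding assms(2) u v by (simp_all add: algebra_simps power2_eq_square)
  then show "a = (2*P * v - p * u) / D \<and> b = (2*u - p * v) / D"
    using assms(1) by (simp add: eq_divide_eq)
next
  assume "a = (2*P * v - p * u) / D \<and> b = (2*u - p * v) / D"
  then have "a * p + 2 * b * P = ((2*P * v - p * u) * p + 2 * (2*u - p * v) * P) / D"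
    "b * p + 2 * a = ((2*u - p * v) * p + 2 * (2*P * v - p * u)) / D"
    by (simp_all add: add_divide_distrib)
  moreover have "(2*P * v - p * u) * p + 2 * (2*u - p * v) * P = - u * D"
    "(2*u - p * v) * p + 2 * (2*P * v - p * u) = - v * D"
    unfolding assms(2) by (simp_all add: algebra_simps power2_eq_square)
  ultimately show "a * p + 2 * b * P = - u \<and> b * p + 2 * a = - v"
    using assms(1) by simp
qed

lemma cramer_c:
  fixes c1 c2 p w1 w2 u v D :: complex
  assumes "D \<noteq> 0" "D = p^2 - 4*(w1*w2)"
  shows "c1 * p - 2 * w2 * c2 = - u \<and> c2 * p - 2 * w1 * c1 = - v
     \<longleftrightarrow> c1 = (- p * u - 2 * w2 * v) / D \<and> c2 = (- p * v - 2 * w1 * u) / D"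
proof
  assume "c1 * p - 2 * w2 * c2 = - u \<and> c2 * p - 2 * w1 * c1 = - v"
  then have u: "u = - (c1 * p - 2 * w2 * c2)" and v: "v = - (c2 * p - 2 * w1 * c1)"
    by auto
  have "c1 * D = - p * u - 2 * w2 * v" "c2 * D = - p * v - 2 * w1 * u"
    unfolding assms(2) u v by (simp_all add: algebra_simps power2_eq_square)
  then show "c1 = (- p * u - 2 * w2 * v) / D \<and> c2 = (- p * v - 2 * w1 * u) / D"
    using assms(1) by (simp add: eq_divide_eq)
next
  assume "c1 = (- p * u - 2 * w2 * v) / D \<and> c2 = (- p * v - 2 * w1 * u) / D"
  then have c1: "c1 = (- p * u - 2 * w2 * v) / D" and c2: "c2 = (- p * v - 2 * w1 * u) / D"
    by auto
  have div: "X / D * p - 2 * w * (Y / D) = (X * p - 2 * w * Y) / D" for X Y w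
    using assms(1) by (simp add: field_simps)
  have "(- p * u - 2 * w2 * v) * p - 2 * w2 * (- p * v - 2 * w1 * u) = - u * D"
    "(- p * v - 2 * w1 * u) * p - 2 * w1 * (- p * u - 2 * w2 * v) = - v * D"
    unfolding assms(2) by (simp_all add: algebra_simps power2_eq_square)
  then show "c1 * p - 2 * w2 * c2 = - u \<and> c2 * p - 2 * w1 * c1 = - v"
    unfolding c1 c2 div using assms(1) by simp
qed

definition nf_a :: "real \<Rightarrow> symb \<Rightarrow> symb \<Rightarrow> symb" where
  "nf_a m q00 q11 x y = (2 * of_real ((x^2+m) * (y^2+m)) * q00 x y - of_real (2*x*y - m) * q11 x y)
                        / of_real (nf_det m x y)"

definition nf_b :: "real \<Rightarrow> symb \<Rightarrow> symb \<Rightarrow> symb" where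
  "nf_b m q00 q11 x y = (2 * q11 x y - of_real (2*x*y - m) * q00 x y) / of_real (nf_det m x y)"

definition nf_c :: "real \<Rightarrow> symb \<Rightarrow> symb" where
  "nf_c m q01 x y = (- of_real (2*x*y - m) * q01 x y - 2 * of_real (y^2+m) * q01 y x)
                    / of_real (nf_det m x y)"

lemma nf_a_mult_det:
  "0 < m \<Longrightarrow> nf_a m q00 q11 x y * of_real (nf_det m x y)
     = 2 * of_real ((x^2+m) * (y^2+m)) * q00 x y - of_real (2*x*y - m) * q11 x y"
  using nf_det_nonzero[of m x y] by (simp add: nf_a_def)

lemma nf_b_mult_det:
  "0 < m \<Longrightarrow> nf_b m q00 q11 x y * of_real (nf_det m x y) = 2 * q11 x y - of_real (2*x*y - m) * q00 x y"
  using nf_det_nonzero[of m x y] by (simp add: nf_b_def)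

lemma nf_c_mult_det:
  "0 < m \<Longrightarrow> nf_c m q01 x y * of_real (nf_det m x y)
     = - of_real (2*x*y - m) * q01 x y - 2 * of_real (y^2+m) * q01 y x"
  using nf_det_nonzero[of m x y] by (simp add: nf_c_def)

lemma normal_form_equations_iff_solution:
  assumes "0 < m"
  shows "(\<forall>x y. a x y * of_real (2*x*y - m) + 2 * b x y * of_real ((x^2+m) * (y^2+m)) = - q11 x y
              \<and> b x y * of_real (2*x*y - m) + 2 * a x y = - q00 x y
              \<and> c x y * of_real (2*x*y - m) - 2 * of_real (y^2+m) * c y x = - q01 x y)
     \<longleftrightarrow> a = nf_a m q00 q11 \<and> b = nf_b m q00 q11 \<and> c = nf_c m q01"
proof -
  have det: "(of_real (nf_det m x y) :: complex) \<noteq> 0" for x y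
    using nf_det_nonzero[OF assms] by simp
  have det_eq: "(of_real (nf_det m x y) :: complex)
      = of_real (2*x*y - m)^2 - 4 * of_real ((x^2+m) * (y^2+m))"
    "(of_real (nf_det m x y) :: complex)
      = of_real (2*x*y - m)^2 - 4 * (of_real (x^2+m) * of_real (y^2+m))" for x y
    by (simp_all add: nf_det_def)
  have comm: "2*y*x - m = 2*x*y - m" for x y :: real
    by simp
  have ab: "a x y * of_real (2*x*y - m) + 2 * b x y * of_real ((x^2+m) * (y^2+m)) = - q11 x y
            \<and> b x y * of_real (2*x*y - m) + 2 * a x y = - q00 x y
        \<longleftrightarrow> a x y = nf_a m q00 q11 x y \<and> b x y = nf_b m q00 q11 x y" for x y
    unfolding nf_a_def nf_b_def by (rule cramer_ab[OF det det_eq(1)])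
  have c: "c x y * of_real (2*x*y - m) - 2 * of_real (y^2+m) * c y x = - q01 x y
           \<and> c y x * of_real (2*y*x - m) - 2 * of_real (x^2+m) * c x y = - q01 y x
        \<longleftrightarrow> c x y = nf_c m q01 x y \<and> c y x = nf_c m q01 y x" for x y
    unfolding nf_c_def nf_det_commute[of m y x] comm by (rule cramer_c[OF det det_eq(2)])
  show ?thesis
    unfolding fun_eq_iff using ab c by blast
qed

lemma sym_symb_nf_a: "sym_symb q00 \<Longrightarrow> sym_symb q11 \<Longrightarrow> sym_symb (nf_a m q00 q11)"
  unfolding sym_symb_def nf_a_def by (simp add: nf_det_commute mult.commute mult.left_commute)

lemma sym_symb_nf_b: "sym_symb q00 \<Longrightarrow> sym_symb q11 \<Longrightarrow> sym_symb (nf_b m q00 q11)"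
  unfolding sym_symb_def nf_b_def by (simp add: nf_det_commute mult.commute mult.left_commute)

lemma real_symb_nf_a: "real_symb q00 \<Longrightarrow> real_symb q11 \<Longrightarrow> real_symb (nf_a m q00 q11)"
  unfolding real_symb_def nf_a_def by (simp add: nf_det_minus)

lemma real_symb_nf_b: "real_symb q00 \<Longrightarrow> real_symb q11 \<Longrightarrow> real_symb (nf_b m q00 q11)"
  unfolding real_symb_def nf_b_def by (simp add: nf_det_minus)

lemma real_symb_nf_c: "real_symb q01 \<Longrightarrow> real_symb (nf_c m q01)"
  unfolding real_symb_def nf_c_def by (simp add: nf_det_minus)

lemma is_normal_form_iff:
  assumes "0 < m" "sym_symb q00" "sym_symb q11" "real_symb q00" "real_symb q01" "real_symb q11"
  shows "is_normal_form m q00 q01 q11 a b c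
     \<longleftrightarrow> a = nf_a m q00 q11 \<and> b = nf_b m q00 q11 \<and> c = nf_c m q01"
proof
  assume "is_normal_form m q00 q01 q11 a b c"
  then have sym: "sym_symb a" "sym_symb b"
    and "qe_equiv (qe_neg (qe_Lambda2 m 3 (qe_LKG m (nf_expr a b c)))) (rhs_expr q00 q01 q11)"
    unfolding is_normal_form_def by auto
  then show "a = nf_a m q00 q11 \<and> b = nf_b m q00 q11 \<and> c = nf_c m q01"
    by (intro normal_form_equations_iff_solution[OF assms(1), THEN iffD1]
        normal_form_equation_iff[OF sym assms(2,3), THEN iffD1])
next
  assume sol: "a = nf_a m q00 q11 \<and> b = nf_b m q00 q11 \<and> c = nf_c m q01"
  then have sym: "sym_symb a" "sym_symb b" and "real_symb a" "real_symb b" "real_symb c"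
    using assms by (auto intro: sym_symb_nf_a sym_symb_nf_b real_symb_nf_a real_symb_nf_b
        real_symb_nf_c)
  moreover have "qe_equiv (qe_neg (qe_Lambda2 m 3 (qe_LKG m (nf_expr a b c)))) (rhs_expr q00 q01 q11)"
    by (intro normal_form_equation_iff[OF sym assms(2,3), THEN iffD2]
        normal_form_equations_iff_solution[OF assms(1), THEN iffD2] sol)
  ultimately show "is_normal_form m q00 q01 q11 a b c"
    unfolding is_normal_form_def by blast
qed

section \<open>Polynomials as one-variable symbols\<close>

lemma jbr1_ge_1: "1 \<le> jbr1 x"
  unfolding jbr1_def by simp

lemma abs_le_jbr1: "\<bar>x\<bar> \<le> jbr1 x"
  unfolding jbr1_def by (simp add: real_le_rsqrt)

lemma jbr1_power_le_powr: "real j \<le> e \<Longrightarrow> jbr1 x ^ j \<le> jbr1 x powr e"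
  using powr_mono[of "real j" e "jbr1 x"] jbr1_ge_1[of x] by (simp add: powr_realpow)

lemma norm_poly_of_real_le:
  fixes p :: "complex poly"
  assumes "degree p \<le> k"
  shows "norm (poly p (of_real x)) \<le> (\<Sum>i\<le>degree p. norm (coeff p i)) * (1 + \<bar>x\<bar>) ^ k"
proof -
  have "norm (poly p (of_real x)) \<le> (\<Sum>i\<le>degree p. norm (coeff p i) * \<bar>x\<bar> ^ i)"
    unfolding poly_altdef by (rule order_trans[OF norm_sum]) (simp add: norm_mult norm_power)
  also have "\<dots> \<le> (\<Sum>i\<le>degree p. norm (coeff p i) * (1 + \<bar>x\<bar>) ^ k)"
  proof (intro sum_mono mult_left_mono)
    fix i assume "i \<in> {..degree p}"
    then have "\<bar>x\<bar> ^ i \<le> (1 + \<bar>x\<bar>) ^ i" "(1 + \<bar>x\<bar>) ^ i \<le> (1 + \<bar>x\<bar>) ^ k"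
      using assms by (auto intro!: power_mono power_increasing)
    then show "\<bar>x\<bar> ^ i \<le> (1 + \<bar>x\<bar>) ^ k"
      by linarith
  qed simp
  finally show ?thesis
    by (simp add: sum_distrib_right)
qed

lemma degree_pderiv_funpow:
  fixes p :: "'a::{comm_semiring_1,semiring_no_zero_divisors,semiring_char_0} poly"
  shows "degree ((pderiv ^^ k) p) = degree p - k"
  by (induction k) (simp_all add: degree_pderiv)

lemma pderiv_funpow_eq_0:
  fixes p :: "'a::{comm_semiring_1,semiring_no_zero_divisors,semiring_char_0} poly"
  shows "degree p < k \<Longrightarrow> (pderiv ^^ k) p = 0"
proof (induction k)
  case (Suc k)
  then have "degree ((pderiv ^^ k) p) = 0"
    by (simp add: degree_pderiv_funpow)
  then show ?case
    by (simp add: pderiv_eq_0_iff)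
qed simp

lemma S1_poly:
  fixes p :: "complex poly"
  assumes "real (degree p) \<le> n"
  shows "S1 n (\<lambda>x. poly p (of_real x))"
  unfolding S1_def
proof (intro exI[of _ "\<lambda>k x. poly ((pderiv ^^ k) p) (of_real x)"] conjI allI)
  fix k x
  show "((\<lambda>x. poly ((pderiv ^^ k) p) (of_real x)) has_vector_derivative
          poly ((pderiv ^^ Suc k) p) (of_real x)) (at x)"
    by (simp add: has_vector_derivative_real_field)
next
  fix k
  let ?S = "\<Sum>i\<le>degree ((pderiv ^^ k) p). norm (coeff ((pderiv ^^ k) p) i)"
  define C where "C = ?S * 2 ^ (degree p - k)"
  show "\<exists>C. \<forall>x. norm (poly ((pderiv ^^ k) p) (of_real x)) \<le> C * jbr1 x powr (n - real k)"
  proof (cases "k \<le> degree p")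
    case True
    have "norm (poly ((pderiv ^^ k) p) (of_real x)) \<le> C * jbr1 x powr (n - real k)" for x
    proof -
      have "1 + \<bar>x\<bar> \<le> 2 * jbr1 x"
        using jbr1_ge_1[of x] abs_le_jbr1[of x] by simp
      then have "(1 + \<bar>x\<bar>) ^ (degree p - k) \<le> 2 ^ (degree p - k) * jbr1 x ^ (degree p - k)"
        by (metis power_mono power_mult_distrib abs_ge_zero add_nonneg_nonneg zero_le_one)
      also have "\<dots> \<le> 2 ^ (degree p - k) * jbr1 x powr (n - real k)"
        using True assms by (intro mult_left_mono jbr1_power_le_powr) auto
      finally have "?S * (1 + \<bar>x\<bar>) ^ (degree p - k) \<le> ?S * (2 ^ (degree p - k) * jbr1 x powr (n - real k))"
        by (intro mult_left_mono) (auto intro: sum_nonneg)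
      with norm_poly_of_real_le[of "(pderiv ^^ k) p" "degree p - k" x] show ?thesis
        unfolding C_def degree_pderiv_funpow by (simp add: mult.assoc)
    qed
    then show ?thesis by blast
  next
    case False
    then show ?thesis
      by (intro exI[of _ 0]) (simp add: pderiv_funpow_eq_0)
  qed
qed simp

section \<open>Low--high expansions\<close>

lemma one_plus_power_le: "0 \<le> a \<Longrightarrow> (1 + a) ^ k \<le> 2 ^ k * (1 + a ^ k :: real)"
proof (cases "a \<le> 1")
  case True
  assume "0 \<le> a"
  with True have "(1 + a) ^ k \<le> 2 ^ k"
    by (intro power_mono) auto
  moreover have "2 ^ k \<le> 2 ^ k * (1 + a ^ k)"
    using mult_left_mono[of 1 "1 + a ^ k" "2 ^ k"] \<open>0 \<le> a\<close> by simp
  ultimately show ?thesis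
    by (rule order_trans)
next
  case False
  then have "(1 + a) ^ k \<le> (2 * a) ^ k"
    by (intro power_mono) auto
  also have "\<dots> \<le> 2 ^ k * (1 + a ^ k)"
    by (simp add: power_mult_distrib)
  finally show ?thesis .
qed

lemma abs_le_one_plus_square: "\<bar>y\<bar> \<le> 1 + (y::real)^2"
proof -
  have "0 \<le> (\<bar>y\<bar> - 1)^2"
    by simp
  then have "2 * \<bar>y\<bar> \<le> 1 + y^2"
    by (simp add: power2_eq_square algebra_simps)
  then show ?thesis
    by simp
qed

lemma norm_linear_in_snd_mult_abs_le:
  fixes r1 r0 :: "complex poly"
  assumes "degree r1 \<le> k" "degree r0 \<le> k"
  shows "norm (poly r1 (of_real x) * of_real y + poly r0 (of_real x)) * \<bar>y\<bar>
     \<le> ((\<Sum>i\<le>degree r1. norm (coeff r1 i)) + (\<Sum>i\<le>degree r0. norm (coeff r0 i)))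
         * (1 + \<bar>x\<bar>) ^ k * (1 + x^2 + y^2)"
proof -
  define S1 where "S1 = (\<Sum>i\<le>degree r1. norm (coeff r1 i))"
  define S0 where "S0 = (\<Sum>i\<le>degree r0. norm (coeff r0 i))"
  define P where "P = (1 + \<bar>x\<bar>) ^ k"
  define B where "B = 1 + x^2 + y^2"
  have "S1 \<ge> 0" "S0 \<ge> 0" "P \<ge> 0"
    unfolding S1_def S0_def P_def by (auto intro!: sum_nonneg)
  have "\<bar>y\<bar> \<le> B" "y^2 \<le> B"
    using abs_le_one_plus_square[of y] zero_le_power2[of x] unfolding B_def by linarith+
  have r1: "norm (poly r1 (of_real x)) \<le> S1 * P"
    unfolding S1_def P_def by (rule norm_poly_of_real_le[OF assms(1)])
  have r0: "norm (poly r0 (of_real x)) \<le> S0 * P"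
    unfolding S0_def P_def by (rule norm_poly_of_real_le[OF assms(2)])
  have "norm (poly r1 (of_real x) * of_real y + poly r0 (of_real x)) * \<bar>y\<bar>
        \<le> (norm (poly r1 (of_real x)) * \<bar>y\<bar> + norm (poly r0 (of_real x))) * \<bar>y\<bar>"
    by (intro mult_right_mono) (metis norm_mult norm_of_real norm_triangle_ineq, simp)
  also have "\<dots> = norm (poly r1 (of_real x)) * y^2 + norm (poly r0 (of_real x)) * \<bar>y\<bar>"
    by (simp add: algebra_simps power2_eq_square abs_mult_self_eq)
  also have "\<dots> \<le> S1 * P * B + S0 * P * B"
    using r1 r0 \<open>\<bar>y\<bar> \<le> B\<close> \<open>y^2 \<le> B\<close> \<open>S1 \<ge> 0\<close> \<open>S0 \<ge> 0\<close> \<open>P \<ge> 0\<close>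
    by (intro add_mono mult_mono) auto
  also have "\<dots> = (S1 + S0) * P * B"
    by (simp add: algebra_simps)
  finally show ?thesis
    unfolding S1_def S0_def P_def B_def .
qed

lemma remainder_over_nf_det_le:
  fixes r1 r0 :: "complex poly"
  assumes "0 < m" "degree r1 \<le> k" "degree r0 \<le> k"
  shows "\<exists>K. \<forall>x y. y \<noteq> 0 \<longrightarrow>
     norm ((poly r1 (of_real x) * of_real y + poly r0 (of_real x)) / of_real (nf_det m x y))
       \<le> K * (1 + \<bar>x\<bar>^k) / \<bar>y\<bar>"
proof (intro exI allI impI)
  fix x y :: real
  assume "y \<noteq> 0"
  define S where "S = (\<Sum>i\<le>degree r1. norm (coeff r1 i)) + (\<Sum>i\<le>degree r0. norm (coeff r0 i))"
  define \<kappa> where "\<kappa> = min (2*m) (3*m^2)"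
  have "S \<ge> 0" "\<kappa> > 0"
    unfolding S_def \<kappa>_def using assms(1) by (auto intro!: sum_nonneg add_nonneg_nonneg)
  have "1 + x^2 + y^2 \<le> \<bar>nf_det m x y\<bar> / \<kappa>"
    using nf_det_bound[OF assms(1), of x y] \<open>\<kappa> > 0\<close>
    unfolding \<kappa>_def by (simp add: pos_le_divide_eq mult.commute)
  then have "S * (1 + \<bar>x\<bar>) ^ k * (1 + x^2 + y^2) \<le> S * (1 + \<bar>x\<bar>) ^ k * (\<bar>nf_det m x y\<bar> / \<kappa>)"
    using \<open>S \<ge> 0\<close> by (intro mult_left_mono) auto
  with norm_linear_in_snd_mult_abs_le[OF assms(2,3), of x y, folded S_def]
  have bound: "norm (poly r1 (of_real x) * of_real y + poly r0 (of_real x)) * \<bar>y\<bar>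
      \<le> S * (1 + \<bar>x\<bar>) ^ k * (\<bar>nf_det m x y\<bar> / \<kappa>)"
    by (rule order_trans)
  have "norm ((poly r1 (of_real x) * of_real y + poly r0 (of_real x)) / of_real (nf_det m x y)) * \<bar>y\<bar>
      = norm (poly r1 (of_real x) * of_real y + poly r0 (of_real x)) * \<bar>y\<bar> / \<bar>nf_det m x y\<bar>"
    by (simp add: norm_divide)
  also have "\<dots> \<le> S * (1 + \<bar>x\<bar>) ^ k / \<kappa>"
    using bound nf_det_nonzero[OF assms(1), of x y] by (simp add: divide_le_eq)
  also have "\<dots> \<le> S * 2 ^ k / \<kappa> * (1 + \<bar>x\<bar>^k)"
  proof -
    have "S * (1 + \<bar>x\<bar>) ^ k \<le> S * (2 ^ k * (1 + \<bar>x\<bar>^k))"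
      using one_plus_power_le[of "\<bar>x\<bar>" k] \<open>S \<ge> 0\<close> by (intro mult_left_mono) auto
    then have "S * (1 + \<bar>x\<bar>) ^ k / \<kappa> \<le> S * (2 ^ k * (1 + \<bar>x\<bar>^k)) / \<kappa>"
      using \<open>\<kappa> > 0\<close> by (intro divide_right_mono) auto
    then show ?thesis
      by (simp add: mult.assoc)
  qed
  finally show "norm ((poly r1 (of_real x) * of_real y + poly r0 (of_real x)) / of_real (nf_det m x y))
      \<le> S * 2 ^ k / \<kappa> * (1 + \<bar>x\<bar>^k) / \<bar>y\<bar>"
    using \<open>y \<noteq> 0\<close> by (subst pos_le_divide_eq) auto
qed

definition nf_det_long_division :: "real \<Rightarrow> symb \<Rightarrow> real \<Rightarrow> real \<Rightarrow> nat \<Rightarrow> bool" where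
  "nf_det_long_division m f n1 n0 k \<longleftrightarrow> (\<exists>q1 q0 r1 r0 :: complex poly.
     real (degree q1) \<le> n1 \<and> real (degree q0) \<le> n0 \<and> degree r1 \<le> k \<and> degree r0 \<le> k \<and>
     (\<forall>x y. f x y * of_real (nf_det m x y)
        = (poly q1 (of_real x) * of_real y + poly q0 (of_real x)) * of_real (nf_det m x y)
          + poly r1 (of_real x) * of_real y + poly r0 (of_real x)))"

lemma low_high_expansion:
  assumes "0 < m" "nf_det_long_division m f n1 n0 k"
  shows "\<exists>f1 f0 K. S1 n1 f1 \<and> S1 n0 f0 \<and>
     (\<forall>x y. y \<noteq> 0 \<longrightarrow> norm (f x y - f1 x * of_real y - f0 x) \<le> K * (1 + \<bar>x\<bar>^k) / \<bar>y\<bar>)"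
proof -
  obtain q1 q0 r1 r0 :: "complex poly"
    where deg: "real (degree q1) \<le> n1" "real (degree q0) \<le> n0" "degree r1 \<le> k" "degree r0 \<le> k"
      and div: "\<And>x y. f x y * of_real (nf_det m x y)
        = (poly q1 (of_real x) * of_real y + poly q0 (of_real x)) * of_real (nf_det m x y)
          + poly r1 (of_real x) * of_real y + poly r0 (of_real x)"
    using assms(2) unfolding nf_det_long_division_def by blast
  have "f x y - poly q1 (of_real x) * of_real y - poly q0 (of_real x)
      = (poly r1 (of_real x) * of_real y + poly r0 (of_real x)) / of_real (nf_det m x y)" for x y
    using div[of x y] nf_det_nonzero[OF assms(1), of x y] by (simp add: field_simps)
  moreover obtain K where "\<forall>x y. y \<noteq> 0 \<longrightarrow>
      norm ((poly r1 (of_real x) * of_real y + poly r0 (of_real x)) / of_real (nf_det m x y))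
        \<le> K * (1 + \<bar>x\<bar>^k) / \<bar>y\<bar>"
    using remainder_over_nf_det_le[OF assms(1) deg(3,4)] by blast
  ultimately show ?thesis
    using S1_poly[OF deg(1)] S1_poly[OF deg(2)] by (intro exI[of _ K] exI) auto
qed

lemma norm_expansion_divide:
  fixes f g1 g0 :: complex
  assumes "y \<noteq> 0" "norm (of_real y * f - g1 * of_real y - g0) \<le> B / \<bar>y\<bar>"
  shows "norm (f - g1 - g0 / of_real y) \<le> B / y^2"
proof -
  have "f - g1 - g0 / of_real y = (of_real y * f - g1 * of_real y - g0) / of_real y"
    using assms(1) by (simp add: field_simps)
  then have "norm (f - g1 - g0 / of_real y) = norm (of_real y * f - g1 * of_real y - g0) / \<bar>y\<bar>"
    by (simp add: norm_divide)
  also have "\<dots> \<le> B / \<bar>y\<bar> / \<bar>y\<bar>"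
    by (rule divide_right_mono[OF assms(2)]) simp
  also have "\<dots> = B / y^2"
    by (simp add: power2_eq_square abs_mult_self_eq)
  finally show ?thesis .
qed

lemma low_high_expansion_divided:
  assumes "0 < m" "nf_det_long_division m (\<lambda>x y. of_real y * f x y) n1 n0 k"
  shows "\<exists>f1 f0 K. S1 n1 f1 \<and> S1 n0 f0 \<and>
     (\<forall>x y. y \<noteq> 0 \<longrightarrow> norm (f x y - f1 x - f0 x / of_real y) \<le> K * (1 + \<bar>x\<bar>^k) / y^2)"
proof -
  obtain f1 f0 K where "S1 n1 f1" "S1 n0 f0"
    and "\<forall>x y. y \<noteq> 0 \<longrightarrow>
      norm (of_real y * f x y - f1 x * of_real y - f0 x) \<le> K * (1 + \<bar>x\<bar>^k) / \<bar>y\<bar>"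
    using low_high_expansion[OF assms] by blast
  then show ?thesis
    by (blast intro: norm_expansion_divide)
qed

(* The explicit polynomials are quotient and remainder of long division by D in Y
   (in X for nf_c_numerator_division_in_fst). *)
lemma nf_a_numerator_division:
  fixes M \<alpha>0 \<alpha>1 \<gamma>0 \<gamma>1 \<gamma>2 \<gamma>3 \<gamma>4 :: complex
  assumes "M \<noteq> 0"
  shows "\<exists>q1 q0 r1 r0. degree q1 \<le> 2 \<and> degree q0 \<le> 3 \<and> degree r1 \<le> 4 \<and> degree r0 \<le> 4 \<and>
    (\<forall>X Y. 2 * ((X^2 + M) * (Y^2 + M)) * (\<alpha>0 + \<alpha>1 * (\<i> * (X + Y)))
             - (2*X*Y - M) * (\<gamma>0 + \<gamma>1 * (\<i> * (X + Y)) + \<gamma>2 * (X * Y) + \<gamma>3 * (X^2 + Y^2)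
                              + \<gamma>4 * (\<i> * (X^2 * Y + X * Y^2)))
       = (poly q1 X * Y + poly q0 X) * - (4*M*(X^2 + X*Y + Y^2) + 3*M^2) + poly r1 X * Y + poly r0 X)"
proof (intro exI conjI allI)
  fix X Y
  show "2 * ((X^2 + M) * (Y^2 + M)) * (\<alpha>0 + \<alpha>1 * (\<i> * (X + Y)))
             - (2*X*Y - M) * (\<gamma>0 + \<gamma>1 * (\<i> * (X + Y)) + \<gamma>2 * (X * Y) + \<gamma>3 * (X^2 + Y^2)
                              + \<gamma>4 * (\<i> * (X^2 * Y + X * Y^2)))
    = (poly [: - \<i> * \<alpha>1 / 2, \<gamma>3 / (2*M), \<i> * (\<gamma>4 - \<alpha>1) / (2*M) :] X * Y
       + poly [: - \<gamma>3 / 4 - \<alpha>0 / 2, \<i> * \<gamma>1 / (2*M) - \<i> * \<gamma>4 / 4, (\<gamma>2 - \<gamma>3 - \<alpha>0) / (2*M) :] X)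
        * - (4*M*(X^2 + X*Y + Y^2) + 3*M^2)
     + poly [: \<i> * M * (\<gamma>1 + M * \<alpha>1 / 2), M * (\<gamma>2 + \<gamma>3 / 2 - 2 * \<alpha>0) - 2 * \<gamma>0,
               3/2 * \<i> * M * (\<gamma>4 - \<alpha>1), 2 * (\<gamma>2 - \<gamma>3 - \<alpha>0), 2 * \<i> * (\<gamma>4 - \<alpha>1) :] X * Y
     + poly [: M * \<gamma>0 + M^2 * (\<alpha>0 / 2 - 3/4 * \<gamma>3), \<i> * M * (5/2 * \<gamma>1 + M * (2 * \<alpha>1 - 3/4 * \<gamma>4)),
               3/2 * M * (\<gamma>2 - \<gamma>3 - \<alpha>0), \<i> * (2 * \<gamma>1 + M * (2 * \<alpha>1 - \<gamma>4)),
               2 * (\<gamma>2 - \<gamma>3 - \<alpha>0) :] X"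
    using assms by (simp add: field_simps)
      (simp add: algebra_simps power2_eq_square power3_eq_cube power4_eq_xxxx)
qed simp_all

lemma nf_a_long_division:
  assumes "0 < m"
    and "\<forall>x y. q00 x y = \<alpha>0 + \<alpha>1 * (\<i> * of_real (x + y))"
    and "\<forall>x y. q11 x y = \<gamma>0 + \<gamma>1 * (\<i> * of_real (x + y)) + \<gamma>2 * of_real (x * y)
                       + \<gamma>3 * of_real (x^2 + y^2) + \<gamma>4 * (\<i> * of_real (x^2 * y + x * y^2))"
  shows "nf_det_long_division m (nf_a m q00 q11) 2 3 4"
proof -
  obtain q1 q0 r1 r0 :: "complex poly"
    where deg: "degree q1 \<le> 2" "degree q0 \<le> 3" "degree r1 \<le> 4" "degree r0 \<le> 4"
    and div: "\<And>X Y. 2 * ((X^2 + of_real m) * (Y^2 + of_real m)) * (\<alpha>0 + \<alpha>1 * (\<i> * (X + Y)))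
             - (2*X*Y - of_real m) * (\<gamma>0 + \<gamma>1 * (\<i> * (X + Y)) + \<gamma>2 * (X * Y) + \<gamma>3 * (X^2 + Y^2)
                              + \<gamma>4 * (\<i> * (X^2 * Y + X * Y^2)))
       = (poly q1 X * Y + poly q0 X) * - (4 * of_real m * (X^2 + X*Y + Y^2) + 3 * (of_real m)^2)
         + poly r1 X * Y + poly r0 X"
    using nf_a_numerator_division[of "of_real m"] assms(1) by force
  have div_eq: "nf_a m q00 q11 x y * of_real (nf_det m x y)
      = (poly q1 (of_real x) * of_real y + poly q0 (of_real x)) * of_real (nf_det m x y)
        + poly r1 (of_real x) * of_real y + poly r0 (of_real x)" for x y
  proof -
    have "nf_a m q00 q11 x y * of_real (nf_det m x y)
        = 2 * of_real ((x^2+m) * (y^2+m)) * q00 x y - of_real (2*x*y - m) * q11 x y"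
      by (rule nf_a_mult_det[OF assms(1)])
    also have "\<dots> = (poly q1 (of_real x) * of_real y + poly q0 (of_real x)) * of_real (nf_det m x y)
        + poly r1 (of_real x) * of_real y + poly r0 (of_real x)"
      using div[of "of_real x" "of_real y"] by (simp add: assms(2,3) nf_det_eq)
    finally show ?thesis .
  qed
  show ?thesis
    unfolding nf_det_long_division_def
    by (rule exI[of _ q1], rule exI[of _ q0], rule exI[of _ r1], rule exI[of _ r0]) (use deg div_eq in simp)
qed

lemma nf_b_numerator_division:
  fixes M \<alpha>0 \<alpha>1 \<gamma>0 \<gamma>1 \<gamma>2 \<gamma>3 \<gamma>4 :: complex
  assumes "M \<noteq> 0"
  shows "\<exists>q1 q0 r1 r0. degree q1 \<le> 1 \<and> degree q0 \<le> 1 \<and> degree r1 \<le> 3 \<and> degree r0 \<le> 3 \<and>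
    (\<forall>X Y. (2 * (\<gamma>0 + \<gamma>1 * (\<i> * (X + Y)) + \<gamma>2 * (X * Y) + \<gamma>3 * (X^2 + Y^2)
                  + \<gamma>4 * (\<i> * (X^2 * Y + X * Y^2)))
              - (2*X*Y - M) * (\<alpha>0 + \<alpha>1 * (\<i> * (X + Y)))) * Y
       = (poly q1 X * Y + poly q0 X) * - (4*M*(X^2 + X*Y + Y^2) + 3*M^2) + poly r1 X * Y + poly r0 X)"
proof (intro exI conjI allI)
  fix X Y
  show "(2 * (\<gamma>0 + \<gamma>1 * (\<i> * (X + Y)) + \<gamma>2 * (X * Y) + \<gamma>3 * (X^2 + Y^2)
                  + \<gamma>4 * (\<i> * (X^2 * Y + X * Y^2)))
              - (2*X*Y - M) * (\<alpha>0 + \<alpha>1 * (\<i> * (X + Y)))) * Y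
    = (poly [: - \<gamma>3 / (2*M), \<i> * (\<alpha>1 - \<gamma>4) / (2*M) :] X * Y
       + poly [: - \<i> * \<alpha>1 / 4 - \<i> * \<gamma>1 / (2*M), (\<gamma>3 - \<gamma>2 + \<alpha>0) / (2*M) :] X)
        * - (4*M*(X^2 + X*Y + Y^2) + 3*M^2)
     + poly [: 2 * \<gamma>0 + M * (\<alpha>0 - 3/2 * \<gamma>3), 3/2 * \<i> * M * (\<alpha>1 - \<gamma>4),
               2 * (\<gamma>3 - \<gamma>2 + \<alpha>0), 2 * \<i> * (\<alpha>1 - \<gamma>4) :] X * Y
     + poly [: - \<i> * M * (3/2 * \<gamma>1 + 3/4 * M * \<alpha>1), 3/2 * M * (\<gamma>3 - \<gamma>2 + \<alpha>0),
               - \<i> * (2 * \<gamma>1 + M * \<alpha>1), 2 * (\<gamma>3 - \<gamma>2 + \<alpha>0) :] X"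
    using assms by (simp add: field_simps)
      (simp add: algebra_simps power2_eq_square power3_eq_cube power4_eq_xxxx)
qed simp_all

lemma nf_b_long_division:
  assumes "0 < m"
    and "\<forall>x y. q00 x y = \<alpha>0 + \<alpha>1 * (\<i> * of_real (x + y))"
    and "\<forall>x y. q11 x y = \<gamma>0 + \<gamma>1 * (\<i> * of_real (x + y)) + \<gamma>2 * of_real (x * y)
                       + \<gamma>3 * of_real (x^2 + y^2) + \<gamma>4 * (\<i> * of_real (x^2 * y + x * y^2))"
  shows "nf_det_long_division m (\<lambda>x y. of_real y * nf_b m q00 q11 x y) 1 2 3"
proof -
  obtain q1 q0 r1 r0 :: "complex poly"
    where deg: "degree q1 \<le> 1" "degree q0 \<le> 1" "degree r1 \<le> 3" "degree r0 \<le> 3"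
    and div: "\<And>X Y. (2 * (\<gamma>0 + \<gamma>1 * (\<i> * (X + Y)) + \<gamma>2 * (X * Y) + \<gamma>3 * (X^2 + Y^2)
                  + \<gamma>4 * (\<i> * (X^2 * Y + X * Y^2)))
              - (2*X*Y - of_real m) * (\<alpha>0 + \<alpha>1 * (\<i> * (X + Y)))) * Y
       = (poly q1 X * Y + poly q0 X) * - (4 * of_real m * (X^2 + X*Y + Y^2) + 3 * (of_real m)^2)
         + poly r1 X * Y + poly r0 X"
    using nf_b_numerator_division[of "of_real m"] assms(1) by force
  have div_eq: "of_real y * nf_b m q00 q11 x y * of_real (nf_det m x y)
      = (poly q1 (of_real x) * of_real y + poly q0 (of_real x)) * of_real (nf_det m x y)
        + poly r1 (of_real x) * of_real y + poly r0 (of_real x)" for x y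
  proof -
    have "of_real y * nf_b m q00 q11 x y * of_real (nf_det m x y)
        = (2 * q11 x y - of_real (2*x*y - m) * q00 x y) * of_real y"
      using nf_b_mult_det[OF assms(1), of q00 q11 x y] by (simp add: ac_simps)
    also have "\<dots> = (poly q1 (of_real x) * of_real y + poly q0 (of_real x)) * of_real (nf_det m x y)
        + poly r1 (of_real x) * of_real y + poly r0 (of_real x)"
      using div[of "of_real x" "of_real y"] by (simp add: assms(2,3) nf_det_eq)
    finally show ?thesis .
  qed
  show ?thesis
    unfolding nf_det_long_division_def
    by (rule exI[of _ q1], rule exI[of _ q0], rule exI[of _ r1], rule exI[of _ r0]) (use deg div_eq in simp)
qed

lemma nf_c_numerator_division_in_snd:
  fixes M \<beta>0 \<beta>1 \<beta>2 \<beta>3 \<beta>4 :: complex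
  assumes "M \<noteq> 0"
  shows "\<exists>q1 q0 r1 r0. degree q1 \<le> 1 \<and> degree q0 \<le> 1 \<and> degree r1 \<le> 3 \<and> degree r0 \<le> 3 \<and>
    (\<forall>X Y. - (2*X*Y - M) * (\<beta>0 + \<beta>1 * (\<i> * X) + \<beta>2 * (\<i> * Y) + \<beta>3 * (X * Y) + \<beta>4 * Y^2)
             - 2 * (Y^2 + M) * (\<beta>0 + \<beta>1 * (\<i> * Y) + \<beta>2 * (\<i> * X) + \<beta>3 * (Y * X) + \<beta>4 * X^2)
       = (poly q1 X * Y + poly q0 X) * - (4*M*(X^2 + X*Y + Y^2) + 3*M^2) + poly r1 X * Y + poly r0 X)"
proof (intro exI conjI allI)
  fix X Y
  show "- (2*X*Y - M) * (\<beta>0 + \<beta>1 * (\<i> * X) + \<beta>2 * (\<i> * Y) + \<beta>3 * (X * Y) + \<beta>4 * Y^2)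
             - 2 * (Y^2 + M) * (\<beta>0 + \<beta>1 * (\<i> * Y) + \<beta>2 * (\<i> * X) + \<beta>3 * (Y * X) + \<beta>4 * X^2)
    = (poly [: \<i> * \<beta>1 / (2*M), (\<beta>3 + \<beta>4) / (2*M) :] X * Y
       + poly [: \<beta>0 / (2*M) - \<beta>4 / 4, \<i> * (2 * \<beta>2 - \<beta>1) / (2*M) :] X)
        * - (4*M*(X^2 + X*Y + Y^2) + 3*M^2)
     + poly [: \<i> * M * (\<beta>2 - \<beta>1 / 2), M * (\<beta>3 + \<beta>4) / 2,
               2 * \<i> * (2 * \<beta>2 - \<beta>1), 2 * (\<beta>3 + \<beta>4) :] X * Y
     + poly [: M * (\<beta>0 / 2 - 3/4 * M * \<beta>4), \<i> * M * (\<beta>2 - \<beta>1 / 2),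
               2 * \<beta>0 - 3 * M * \<beta>4, 2 * \<i> * (2 * \<beta>2 - \<beta>1) :] X"
    using assms by (simp add: field_simps)
      (simp add: algebra_simps power2_eq_square power3_eq_cube power4_eq_xxxx)
qed simp_all

lemma nf_c_numerator_division_in_fst:
  fixes M \<beta>0 \<beta>1 \<beta>2 \<beta>3 \<beta>4 :: complex
  assumes "M \<noteq> 0"
  shows "\<exists>q1 q0 r1 r0. degree q1 \<le> 2 \<and> degree q0 \<le> 3 \<and> degree r1 \<le> 4 \<and> degree r0 \<le> 4 \<and>
    (\<forall>X Y. (- (2*X*Y - M) * (\<beta>0 + \<beta>1 * (\<i> * X) + \<beta>2 * (\<i> * Y) + \<beta>3 * (X * Y) + \<beta>4 * Y^2)
              - 2 * (Y^2 + M) * (\<beta>0 + \<beta>1 * (\<i> * Y) + \<beta>2 * (\<i> * X) + \<beta>3 * (Y * X) + \<beta>4 * X^2)) * X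
       = (poly q1 Y * X + poly q0 Y) * - (4*M*(X^2 + X*Y + Y^2) + 3*M^2) + poly r1 Y * X + poly r0 Y)"
proof (intro exI conjI allI)
  fix X Y
  show "(- (2*X*Y - M) * (\<beta>0 + \<beta>1 * (\<i> * X) + \<beta>2 * (\<i> * Y) + \<beta>3 * (X * Y) + \<beta>4 * Y^2)
              - 2 * (Y^2 + M) * (\<beta>0 + \<beta>1 * (\<i> * Y) + \<beta>2 * (\<i> * X) + \<beta>3 * (Y * X) + \<beta>4 * X^2)) * X
    = (poly [: \<beta>4 / 2, \<i> * \<beta>1 / (2*M), (\<beta>3 + \<beta>4) / (2*M) :] Y * X
       + poly [: \<i> * (\<beta>2 / 2 - \<beta>1 / 4), \<beta>3 / 4 - \<beta>4 / 2 + \<beta>0 / (2*M),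
                 \<i> * (2 * \<beta>2 - \<beta>1) / (2*M) :] Y)
        * - (4*M*(X^2 + X*Y + Y^2) + 3*M^2)
     + poly [: M * (3/2 * M * \<beta>4 - \<beta>0), 3/2 * \<i> * M * (2 * \<beta>2 - \<beta>1), 5/2 * M * (\<beta>3 + \<beta>4),
               2 * \<i> * (2 * \<beta>2 - \<beta>1), 2 * (\<beta>3 + \<beta>4) :] Y * X
     + poly [: 3/4 * \<i> * M^2 * (2 * \<beta>2 - \<beta>1), M * (3/2 * \<beta>0 - 3/2 * M * \<beta>4 + 3/4 * M * \<beta>3),
               5/2 * \<i> * M * (2 * \<beta>2 - \<beta>1), 2 * \<beta>0 - 2 * M * \<beta>4 + M * \<beta>3,
               2 * \<i> * (2 * \<beta>2 - \<beta>1) :] Y"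
    using assms by (simp add: field_simps)
      (simp add: algebra_simps power2_eq_square power3_eq_cube power4_eq_xxxx)
qed simp_all

lemma nf_c_long_division:
  assumes "0 < m"
    and "\<forall>x y. q01 x y = \<beta>0 + \<beta>1 * (\<i> * of_real x) + \<beta>2 * (\<i> * of_real y)
                       + \<beta>3 * of_real (x * y) + \<beta>4 * of_real (y^2)"
  shows "nf_det_long_division m (nf_c m q01) 1 2 3"
proof -
  obtain q1 q0 r1 r0 :: "complex poly"
    where deg: "degree q1 \<le> 1" "degree q0 \<le> 1" "degree r1 \<le> 3" "degree r0 \<le> 3"
    and div: "\<And>X Y. - (2*X*Y - of_real m) * (\<beta>0 + \<beta>1 * (\<i> * X) + \<beta>2 * (\<i> * Y) + \<beta>3 * (X * Y) + \<beta>4 * Y^2)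
             - 2 * (Y^2 + of_real m) * (\<beta>0 + \<beta>1 * (\<i> * Y) + \<beta>2 * (\<i> * X) + \<beta>3 * (Y * X) + \<beta>4 * X^2)
       = (poly q1 X * Y + poly q0 X) * - (4 * of_real m * (X^2 + X*Y + Y^2) + 3 * (of_real m)^2)
         + poly r1 X * Y + poly r0 X"
    using nf_c_numerator_division_in_snd[of "of_real m"] assms(1) by force
  have div_eq: "nf_c m q01 x y * of_real (nf_det m x y)
      = (poly q1 (of_real x) * of_real y + poly q0 (of_real x)) * of_real (nf_det m x y)
        + poly r1 (of_real x) * of_real y + poly r0 (of_real x)" for x y
  proof -
    have "nf_c m q01 x y * of_real (nf_det m x y)
        = - of_real (2*x*y - m) * q01 x y - 2 * of_real (y^2+m) * q01 y x"
      by (rule nf_c_mult_det[OF assms(1)])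
    also have "\<dots> = (poly q1 (of_real x) * of_real y + poly q0 (of_real x)) * of_real (nf_det m x y)
        + poly r1 (of_real x) * of_real y + poly r0 (of_real x)"
      using div[of "of_real x" "of_real y"] by (simp add: assms(2) nf_det_eq)
    finally show ?thesis .
  qed
  show ?thesis
    unfolding nf_det_long_division_def
    by (rule exI[of _ q1], rule exI[of _ q0], rule exI[of _ r1], rule exI[of _ r0]) (use deg div_eq in simp)
qed

lemma nf_c_swap_long_division:
  assumes "0 < m"
    and "\<forall>x y. q01 x y = \<beta>0 + \<beta>1 * (\<i> * of_real x) + \<beta>2 * (\<i> * of_real y)
                       + \<beta>3 * of_real (x * y) + \<beta>4 * of_real (y^2)"
  shows "nf_det_long_division m (\<lambda>x y. of_real y * nf_c m q01 y x) 2 3 4"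
proof -
  obtain q1 q0 r1 r0 :: "complex poly"
    where deg: "degree q1 \<le> 2" "degree q0 \<le> 3" "degree r1 \<le> 4" "degree r0 \<le> 4"
    and div: "\<And>X Y. (- (2*X*Y - of_real m) * (\<beta>0 + \<beta>1 * (\<i> * X) + \<beta>2 * (\<i> * Y) + \<beta>3 * (X * Y) + \<beta>4 * Y^2)
             - 2 * (Y^2 + of_real m) * (\<beta>0 + \<beta>1 * (\<i> * Y) + \<beta>2 * (\<i> * X) + \<beta>3 * (Y * X) + \<beta>4 * X^2)) * X
       = (poly q1 Y * X + poly q0 Y) * - (4 * of_real m * (X^2 + X*Y + Y^2) + 3 * (of_real m)^2)
         + poly r1 Y * X + poly r0 Y"
    using nf_c_numerator_division_in_fst[of "of_real m"] assms(1) by force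
  have div_eq: "of_real y * nf_c m q01 y x * of_real (nf_det m x y)
      = (poly q1 (of_real x) * of_real y + poly q0 (of_real x)) * of_real (nf_det m x y)
        + poly r1 (of_real x) * of_real y + poly r0 (of_real x)" for x y
  proof -
    have "of_real y * nf_c m q01 y x * of_real (nf_det m x y)
        = (- of_real (2*y*x - m) * q01 y x - 2 * of_real (x^2+m) * q01 x y) * of_real y"
      using nf_c_mult_det[OF assms(1), of q01 y x] by (simp add: nf_det_commute ac_simps)
    also have "\<dots> = (poly q1 (of_real x) * of_real y + poly q0 (of_real x)) * of_real (nf_det m x y)
        + poly r1 (of_real x) * of_real y + poly r0 (of_real x)"
      using div[of "of_real y" "of_real x"] by (simp add: assms(2) nf_det_commute[of m y x] nf_det_eq)
    finally show ?thesis .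
  qed
  show ?thesis
    unfolding nf_det_long_division_def
    by (rule exI[of _ q1], rule exI[of _ q0], rule exI[of _ r1], rule exI[of _ r0]) (use deg div_eq in simp)
qed

section \<open>A calculus of symbol expressions\<close>

lemma jbr2_ge_1: "1 \<le> jbr2 x y"
  unfolding jbr2_def by simp

lemma abs_le_jbr2: "\<bar>x\<bar> \<le> jbr2 x y" "\<bar>y\<bar> \<le> jbr2 x y"
  unfolding jbr2_def by (simp_all add: real_le_rsqrt)

lemma jbr2_powr_mono: "a \<le> b \<Longrightarrow> jbr2 x y powr a \<le> jbr2 x y powr b"
  using powr_mono jbr2_ge_1 by blast

lemma jbr2_powr_2: "jbr2 x y powr 2 = 1 + x^2 + y^2"
  unfolding jbr2_def by (simp add: powr_half_sqrt[symmetric] powr_powr add_nonneg_nonneg)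

lemma norm_le_jbr2_powr_mono:
  assumes "norm z \<le> C * jbr2 x y powr a" "a \<le> b" "0 \<le> C"
  shows "norm z \<le> C * jbr2 x y powr b"
  using assms(1) mult_left_mono[OF jbr2_powr_mono[OF assms(2), of x y] assms(3)] by linarith

definition symbol_derivs :: "real \<Rightarrow> (nat \<Rightarrow> nat \<Rightarrow> symb) \<Rightarrow> bool" where
  "symbol_derivs n D \<longleftrightarrow>
     (\<forall>i j x y. ((\<lambda>t. D i j t y) has_vector_derivative D (Suc i) j x y) (at x)) \<and>
     (\<forall>i j x y. ((\<lambda>t. D i j x t) has_vector_derivative D i (Suc j) x y) (at y)) \<and>
     (\<forall>i j. \<exists>C. \<forall>x y. norm (D i j x y) \<le> C * jbr2 x y powr (n - real (i + j)))"

lemma S2_iff_symbol_derivs: "S2 n f \<longleftrightarrow> (\<exists>D. D 0 0 = f \<and> symbol_derivs n D)"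
  unfolding S2_def symbol_derivs_def by blast

(* SChi i j stands for the derivative d_xi1^i d_xi2^j chi of the cutoff, taken from a family F. *)
datatype sexp = SConst complex | SXi1 | SXi2 | SChi nat nat
  | SAdd sexp sexp | SMult sexp sexp | SInverse sexp

primrec sval :: "(nat \<Rightarrow> nat \<Rightarrow> symb) \<Rightarrow> sexp \<Rightarrow> symb" where
  "sval F (SConst c) = (\<lambda>x y. c)"
| "sval F SXi1 = (\<lambda>x y. of_real x)"
| "sval F SXi2 = (\<lambda>x y. of_real y)"
| "sval F (SChi i j) = F i j"
| "sval F (SAdd a b) = (\<lambda>x y. sval F a x y + sval F b x y)"
| "sval F (SMult a b) = (\<lambda>x y. sval F a x y * sval F b x y)"
| "sval F (SInverse a) = (\<lambda>x y. inverse (sval F a x y))"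

primrec sderiv1 :: "sexp \<Rightarrow> sexp" where
  "sderiv1 (SConst c) = SConst 0"
| "sderiv1 SXi1 = SConst 1"
| "sderiv1 SXi2 = SConst 0"
| "sderiv1 (SChi i j) = SChi (Suc i) j"
| "sderiv1 (SAdd a b) = SAdd (sderiv1 a) (sderiv1 b)"
| "sderiv1 (SMult a b) = SAdd (SMult (sderiv1 a) b) (SMult a (sderiv1 b))"
| "sderiv1 (SInverse a) = SMult (SMult (SConst (-1)) (sderiv1 a)) (SMult (SInverse a) (SInverse a))"

primrec sderiv2 :: "sexp \<Rightarrow> sexp" where
  "sderiv2 (SConst c) = SConst 0"
| "sderiv2 SXi1 = SConst 0"
| "sderiv2 SXi2 = SConst 1"
| "sderiv2 (SChi i j) = SChi i (Suc j)"
| "sderiv2 (SAdd a b) = SAdd (sderiv2 a) (sderiv2 b)"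
| "sderiv2 (SMult a b) = SAdd (SMult (sderiv2 a) b) (SMult a (sderiv2 b))"
| "sderiv2 (SInverse a) = SMult (SMult (SConst (-1)) (sderiv2 a)) (SMult (SInverse a) (SInverse a))"

(* The constant 0 has every order, since the derivative of a constant of order 0 must have
   order -1. *)
inductive has_order :: "(nat \<Rightarrow> nat \<Rightarrow> symb) \<Rightarrow> sexp \<Rightarrow> real \<Rightarrow> bool" for F where
  zero: "has_order F (SConst 0) n"
| const: "0 \<le> n \<Longrightarrow> has_order F (SConst c) n"
| xi1: "1 \<le> n \<Longrightarrow> has_order F SXi1 n"
| xi2: "1 \<le> n \<Longrightarrow> has_order F SXi2 n"
| chi: "- real (i + j) \<le> n \<Longrightarrow> has_order F (SChi i j) n"
| add: "has_order F a n \<Longrightarrow> has_order F b n \<Longrightarrow> has_order F (SAdd a b) n"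
| mult: "has_order F a n1 \<Longrightarrow> has_order F b n2 \<Longrightarrow> n1 + n2 \<le> n \<Longrightarrow> has_order F (SMult a b) n"
| inverse: "has_order F a k \<Longrightarrow> 0 < c \<Longrightarrow> \<forall>x y. c * jbr2 x y powr k \<le> norm (sval F a x y)
    \<Longrightarrow> - k \<le> n \<Longrightarrow> has_order F (SInverse a) n"

lemma has_order_mono: "has_order F e n \<Longrightarrow> n \<le> n' \<Longrightarrow> has_order F e n'"
proof (induction arbitrary: n' rule: has_order.induct)
  case (mult a n1 b n2 n)
  then show ?case by (intro has_order.mult[of F a n1 b n2]) auto
next
  case (inverse a k c n)
  then show ?case by (intro has_order.inverse[of F a k c]) auto
qed (auto intro: has_order.intros)

lemma has_order_sderiv:
  "has_order F e n \<Longrightarrow> has_order F (sderiv1 e) (n - 1) \<and> has_order F (sderiv2 e) (n - 1)"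
proof (induction rule: has_order.induct)
  case (mult a n1 b n2 n)
  have "has_order F (SMult (d a) b) (n - 1)" "has_order F (SMult a (d b)) (n - 1)"
    if "has_order F (d a) (n1 - 1)" "has_order F (d b) (n2 - 1)" for d
    using that mult.hyps by (auto intro: has_order.mult)
  with mult.IH show ?case
    by (auto intro: has_order.add)
next
  case (inverse a k c n)
  have inv: "has_order F (SInverse a) (- k)"
    using inverse.hyps by (intro has_order.inverse[of F a k c]) auto
  have "has_order F (SMult (SMult (SConst (-1)) (d a)) (SMult (SInverse a) (SInverse a))) (n - 1)"
    if "has_order F (d a) (k - 1)" for d
    using that inv inverse.hyps
    by (intro has_order.mult[of F _ "k - 1" _ "-2*k"] has_order.mult[of F _ 0 _ "k - 1"]
        has_order.mult[of F _ "-k" _ "-k"]) (auto intro: has_order.const)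
  with inverse.IH show ?case
    by simp
qed (auto intro: has_order.intros)

lemma has_order_bound:
  assumes "symbol_derivs 0 F"
  shows "has_order F e n \<Longrightarrow> \<exists>C\<ge>0. \<forall>x y. norm (sval F e x y) \<le> C * jbr2 x y powr n"
proof (induction rule: has_order.induct)
  case (zero n)
  then show ?case by (intro exI[of _ 0]) auto
next
  case (const n c)
  have "norm c \<le> norm c * jbr2 x y powr n" for x y
    using ge_one_powr_ge_zero[OF jbr2_ge_1 const] by (simp add: mult_le_cancel_left1)
  then show ?case
    by (intro exI[of _ "norm c"]) auto
next
  case (xi1 n)
  have "norm (of_real x :: complex) \<le> 1 * jbr2 x y powr n" for x y
    by (rule norm_le_jbr2_powr_mono[where a=1]) (use abs_le_jbr2(1)[of x y] jbr2_ge_1[of x y] xi1 in auto)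
  then show ?case
    by (intro exI[of _ 1]) auto
next
  case (xi2 n)
  have "norm (of_real y :: complex) \<le> 1 * jbr2 x y powr n" for x y
    by (rule norm_le_jbr2_powr_mono[where a=1]) (use abs_le_jbr2(2)[of y x] jbr2_ge_1[of x y] xi2 in auto)
  then show ?case
    by (intro exI[of _ 1]) auto
next
  case (chi i j n)
  obtain C where C: "\<And>x y. norm (F i j x y) \<le> C * jbr2 x y powr (0 - real (i + j))"
    using assms unfolding symbol_derivs_def by blast
  have Cmax: "norm (F i j x y) \<le> max C 0 * jbr2 x y powr (0 - real (i + j))" for x y
    by (rule order_trans[OF C mult_right_mono]) simp_all
  have "norm (F i j x y) \<le> max C 0 * jbr2 x y powr n" for x y
    by (rule norm_le_jbr2_powr_mono[OF Cmax]) (use chi in auto)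
  then show ?case
    by (intro exI[of _ "max C 0"]) auto
next
  case (add a n b)
  then obtain C1 C2 where "C1 \<ge> 0" "C2 \<ge> 0" "\<And>x y. norm (sval F a x y) \<le> C1 * jbr2 x y powr n"
    "\<And>x y. norm (sval F b x y) \<le> C2 * jbr2 x y powr n" by blast
  then show ?case
    by (intro exI[of _ "C1 + C2"])
      (auto simp: algebra_simps intro!: order.trans[OF norm_triangle_ineq] add_mono)
next
  case (mult a n1 b n2 n)
  then obtain C1 C2 where C: "C1 \<ge> 0" "C2 \<ge> 0"
    "\<And>x y. norm (sval F a x y) \<le> C1 * jbr2 x y powr n1"
    "\<And>x y. norm (sval F b x y) \<le> C2 * jbr2 x y powr n2" by blast
  have prod: "norm (sval F (SMult a b) x y) \<le> (C1 * C2) * jbr2 x y powr (n1 + n2)" for x y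
  proof -
    have "norm (sval F (SMult a b) x y) = norm (sval F a x y) * norm (sval F b x y)"
      by (simp add: norm_mult)
    also have "\<dots> \<le> (C1 * jbr2 x y powr n1) * (C2 * jbr2 x y powr n2)"
      using C by (intro mult_mono) auto
    also have "\<dots> = (C1 * C2) * jbr2 x y powr (n1 + n2)"
      by (simp add: powr_add)
    finally show ?thesis .
  qed
  have "norm (sval F (SMult a b) x y) \<le> (C1 * C2) * jbr2 x y powr n" for x y
    by (rule norm_le_jbr2_powr_mono[OF prod]) (use mult.hyps C in auto)
  then show ?case
    using C by (intro exI[of _ "C1 * C2"]) auto
next
  case (inverse a k c n)
  have inv: "norm (sval F (SInverse a) x y) \<le> (1 / c) * jbr2 x y powr (- k)" for x y
  proof -
    have "c * jbr2 x y powr k \<le> norm (sval F a x y)" "0 < c * jbr2 x y powr k"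
      using inverse.hyps jbr2_ge_1[of x y] by auto
    then have "norm (sval F (SInverse a) x y) \<le> inverse (c * jbr2 x y powr k)"
      unfolding sval.simps norm_inverse by (rule le_imp_inverse_le)
    also have "\<dots> = (1 / c) * jbr2 x y powr (- k)"
      by (simp add: powr_minus divide_inverse)
    finally show ?thesis .
  qed
  have "norm (sval F (SInverse a) x y) \<le> (1 / c) * jbr2 x y powr n" for x y
    by (rule norm_le_jbr2_powr_mono[OF inv]) (use inverse.hyps in auto)
  then show ?case
    using inverse.hyps by (intro exI[of _ "1 / c"]) auto
qed

lemma sval_inverse_nonzero:
  assumes "0 < c" "\<forall>x y. c * jbr2 x y powr k \<le> norm (sval F a x y)"
  shows "sval F a x y \<noteq> 0"
proof -
  have "0 < c * jbr2 x y powr k"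
    using assms(1) jbr2_ge_1[of x y] by simp
  with assms(2) show ?thesis
    by (metis norm_zero not_le)
qed

lemma has_vector_derivative_inverse:
  assumes "(f has_vector_derivative f') (at x)" "f x \<noteq> (0::complex)"
  shows "((\<lambda>t. inverse (f t)) has_vector_derivative (-1 * f') * (inverse (f x) * inverse (f x))) (at x)"
proof -
  have "(inverse has_field_derivative - (inverse (f x) ^ Suc (Suc 0))) (at (f x))"
    using assms(2) by (rule DERIV_inverse)
  from field_vector_diff_chain_at[OF assms(1) this] show ?thesis
    by (simp add: o_def algebra_simps power2_eq_square)
qed

lemma has_vector_derivative_sval:
  assumes "symbol_derivs 0 F"
  shows "has_order F e n \<Longrightarrow>
    ((\<lambda>t. sval F e t y) has_vector_derivative sval F (sderiv1 e) x y) (at x) \<and>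
    ((\<lambda>t. sval F e x t) has_vector_derivative sval F (sderiv2 e) x y) (at y)"
proof (induction arbitrary: x y rule: has_order.induct)
  case (chi i j n)
  then show ?case
    using assms unfolding symbol_derivs_def by simp
next
  case (add a n b)
  then show ?case
    by (simp add: has_vector_derivative_add)
next
  case (mult a n1 b n2 n)
  show ?case
    using has_vector_derivative_mult[OF conjunct1[OF mult.IH(1)] conjunct1[OF mult.IH(2)]]
      has_vector_derivative_mult[OF conjunct2[OF mult.IH(1)] conjunct2[OF mult.IH(2)]]
    by (simp add: algebra_simps)
next
  case (inverse a k c n)
  note nonzero = sval_inverse_nonzero[OF inverse.hyps(2,3)]
  show ?case
    using has_vector_derivative_inverse[OF conjunct1[OF inverse.IH] nonzero]
      has_vector_derivative_inverse[OF conjunct2[OF inverse.IH] nonzero] by simp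
qed (auto intro: has_vector_derivative_of_real[OF DERIV_ident, simplified])

lemma sval_sderiv_commute: "sval F (sderiv1 (sderiv2 e)) = sval F (sderiv2 (sderiv1 e))"
  by (induction e) (simp_all add: fun_eq_iff algebra_simps)

lemma sval_sderiv1_cong:
  assumes "symbol_derivs 0 F" "has_order F u n1" "has_order F v n2" "sval F u = sval F v"
  shows "sval F (sderiv1 u) = sval F (sderiv1 v)"
proof (intro ext)
  fix x y
  have "((\<lambda>t. sval F u t y) has_vector_derivative sval F (sderiv1 u) x y) (at x)"
    "((\<lambda>t. sval F u t y) has_vector_derivative sval F (sderiv1 v) x y) (at x)"
    using has_vector_derivative_sval[OF assms(1) assms(2)] has_vector_derivative_sval[OF assms(1) assms(3)]
      assms(4) by auto
  then show "sval F (sderiv1 u) x y = sval F (sderiv1 v) x y"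
    by (rule vector_derivative_unique_at)
qed

lemma has_order_sderiv_funpow:
  assumes "has_order F e n"
  shows "has_order F ((sderiv2 ^^ j) e) (n - real j)"
    and "has_order F ((sderiv1 ^^ i) ((sderiv2 ^^ j) e)) (n - real (i + j))"
proof -
  show j: "has_order F ((sderiv2 ^^ j) e) (n - real j)" for j
  proof (induction j)
    case (Suc j)
    then show ?case
      using has_order_sderiv by (fastforce simp: algebra_simps)
  qed (simp add: assms)
  show "has_order F ((sderiv1 ^^ i) ((sderiv2 ^^ j) e)) (n - real (i + j))"
  proof (induction i)
    case (Suc i)
    then show ?case
      using has_order_sderiv by (fastforce simp: algebra_simps)
  qed (simp add: j)
qed

lemma sval_sderiv2_sderiv1_funpow:
  assumes "symbol_derivs 0 F" "has_order F u n"
  shows "sval F (sderiv2 ((sderiv1 ^^ i) u)) = sval F ((sderiv1 ^^ i) (sderiv2 u))"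
proof (induction i)
  case (Suc i)
  have "sval F (sderiv2 ((sderiv1 ^^ Suc i) u)) = sval F (sderiv1 (sderiv2 ((sderiv1 ^^ i) u)))"
    by (simp add: sval_sderiv_commute)
  also have "\<dots> = sval F (sderiv1 ((sderiv1 ^^ i) (sderiv2 u)))"
    using has_order_sderiv[OF has_order_sderiv_funpow(2)[OF assms(2), of i 0]]
      has_order_sderiv_funpow(2)[OF conjunct2[OF has_order_sderiv[OF assms(2)]], of i 0]
    by (intro sval_sderiv1_cong[OF assms(1) _ _ Suc.IH]) auto
  finally show ?case
    by simp
qed simp

lemma has_order_imp_S2:
  assumes "symbol_derivs 0 F" "has_order F e n"
  shows "S2 n (sval F e)"
  unfolding S2_iff_symbol_derivs symbol_derivs_def
proof (intro exI[of _ "\<lambda>i j. sval F ((sderiv1 ^^ i) ((sderiv2 ^^ j) e))"] conjI allI)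
  fix i j x y
  note order = has_order_sderiv_funpow(2)[OF assms(2), of i j]
  show "((\<lambda>t. sval F ((sderiv1 ^^ i) ((sderiv2 ^^ j) e)) t y) has_vector_derivative
      sval F ((sderiv1 ^^ Suc i) ((sderiv2 ^^ j) e)) x y) (at x)"
    using has_vector_derivative_sval[OF assms(1) order] by simp
  have "sval F (sderiv2 ((sderiv1 ^^ i) ((sderiv2 ^^ j) e))) = sval F ((sderiv1 ^^ i) ((sderiv2 ^^ Suc j) e))"
    using sval_sderiv2_sderiv1_funpow[OF assms(1) has_order_sderiv_funpow(1)[OF assms(2), of j]] by simp
  with has_vector_derivative_sval[OF assms(1) order]
  show "((\<lambda>t. sval F ((sderiv1 ^^ i) ((sderiv2 ^^ j) e)) x t) has_vector_derivative
      sval F ((sderiv1 ^^ i) ((sderiv2 ^^ Suc j) e)) x y) (at y)"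
    by metis
next
  fix i j
  show "\<exists>C. \<forall>x y. norm (sval F ((sderiv1 ^^ i) ((sderiv2 ^^ j) e)) x y)
      \<le> C * jbr2 x y powr (n - real (i + j))"
    using has_order_bound[OF assms(1) has_order_sderiv_funpow(2)[OF assms(2)]] by blast
qed simp

section \<open>High--high decomposition\<close>

primrec spoly :: "sexp \<Rightarrow> bool" where
  "spoly (SConst c) = True"
| "spoly SXi1 = True"
| "spoly SXi2 = True"
| "spoly (SChi i j) = False"
| "spoly (SAdd a b) = (spoly a \<and> spoly b)"
| "spoly (SMult a b) = (spoly a \<and> spoly b)"
| "spoly (SInverse a) = False"

primrec sdegree :: "sexp \<Rightarrow> nat" where
  "sdegree (SConst c) = 0"
| "sdegree SXi1 = 1"
| "sdegree SXi2 = 1"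
| "sdegree (SChi i j) = 0"
| "sdegree (SAdd a b) = max (sdegree a) (sdegree b)"
| "sdegree (SMult a b) = sdegree a + sdegree b"
| "sdegree (SInverse a) = 0"

lemma has_order_spoly: "spoly e \<Longrightarrow> real (sdegree e) \<le> n \<Longrightarrow> has_order F e n"
proof (induction e arbitrary: n)
  case (SMult a b)
  then show ?case
    by (intro has_order.mult[of F a "real (sdegree a)" b "real (sdegree b)"]) auto
qed (auto intro: has_order.intros)

lemma spoly_antidiagonal_division:
  "has_order F e n \<Longrightarrow> spoly e \<Longrightarrow> \<exists>Q R. has_order F Q (n - 1) \<and> has_order F R n \<and>
     (\<forall>x y. sval F e x y = of_real (x + y) * sval F Q x y + sval F R x y) \<and>
     (\<forall>x y. sval F R x y = sval F e x (-x))"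
proof (induction rule: has_order.induct)
  case (zero n)
  show ?case
    by (rule exI[of _ "SConst 0"], rule exI[of _ "SConst 0"]) (auto intro: has_order.zero)
next
  case (const n c)
  show ?case
    by (rule exI[of _ "SConst 0"], rule exI[of _ "SConst c"]) (use const in \<open>auto intro: has_order.intros\<close>)
next
  case (xi1 n)
  show ?case
    by (rule exI[of _ "SConst 0"], rule exI[of _ SXi1]) (use xi1 in \<open>auto intro: has_order.intros\<close>)
next
  case (xi2 n)
  have "has_order F (SMult (SConst (-1)) SXi1) n"
    using xi2 by (intro has_order.mult[of F _ 0 _ 1]) (auto intro: has_order.intros)
  show ?case
    by (rule exI[of _ "SConst 1"], rule exI[of _ "SMult (SConst (-1)) SXi1"])
      (use xi2 \<open>has_order F (SMult (SConst (-1)) SXi1) n\<close> in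
        \<open>auto intro: has_order.intros simp: algebra_simps\<close>)
next
  case (add a n b)
  then have "spoly a" "spoly b"
    by simp_all
  then obtain Qa Ra Qb Rb where
    ord: "has_order F Qa (n - 1)" "has_order F Ra n" "has_order F Qb (n - 1)" "has_order F Rb n"
    and a: "\<And>x y. sval F a x y = of_real (x + y) * sval F Qa x y + sval F Ra x y"
    and b: "\<And>x y. sval F b x y = of_real (x + y) * sval F Qb x y + sval F Rb x y"
    and Ra: "\<And>x y. sval F Ra x y = sval F a x (-x)" and Rb: "\<And>x y. sval F Rb x y = sval F b x (-x)"
    using add.IH by metis
  show ?case
  proof (rule exI[of _ "SAdd Qa Qb"], rule exI[of _ "SAdd Ra Rb"], intro conjI allI)
    show "has_order F (SAdd Qa Qb) (n - 1)" "has_order F (SAdd Ra Rb) n"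
      using ord by (auto intro: has_order.add)
    fix x y
    show "sval F (SAdd a b) x y = of_real (x + y) * sval F (SAdd Qa Qb) x y + sval F (SAdd Ra Rb) x y"
      using a[of x y] b[of x y] by (simp add: algebra_simps)
    show "sval F (SAdd Ra Rb) x y = sval F (SAdd a b) x (-x)"
      using Ra[of x y] Rb[of x y] by simp
  qed
next
  case (mult a n1 b n2 n)
  then have "spoly a" "spoly b"
    by simp_all
  then obtain Qa Ra Qb Rb where
    ord: "has_order F Qa (n1 - 1)" "has_order F Ra n1" "has_order F Qb (n2 - 1)" "has_order F Rb n2"
    and a: "\<And>x y. sval F a x y = of_real (x + y) * sval F Qa x y + sval F Ra x y"
    and b: "\<And>x y. sval F b x y = of_real (x + y) * sval F Qb x y + sval F Rb x y"
    and Ra: "\<And>x y. sval F Ra x y = sval F a x (-x)" and Rb: "\<And>x y. sval F Rb x y = sval F b x (-x)"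
    using mult.IH by metis
  show ?case
  proof (rule exI[of _ "SAdd (SMult Qa b) (SMult Ra Qb)"], rule exI[of _ "SMult Ra Rb"], intro conjI allI)
    show "has_order F (SAdd (SMult Qa b) (SMult Ra Qb)) (n - 1)"
      using ord mult.hyps
      by (intro has_order.add has_order.mult[of F Qa "n1 - 1" b n2] has_order.mult[of F Ra n1 Qb "n2 - 1"])
        auto
    show "has_order F (SMult Ra Rb) n"
      using ord mult.hyps by (intro has_order.mult[of F Ra n1 Rb n2]) auto
    fix x y
    show "sval F (SMult a b) x y
        = of_real (x + y) * sval F (SAdd (SMult Qa b) (SMult Ra Qb)) x y + sval F (SMult Ra Rb) x y"
      using a[of x y] b[of x y] by (simp add: algebra_simps)
    show "sval F (SMult Ra Rb) x y = sval F (SMult a b) x (-x)"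
      using Ra[of x y] Rb[of x y] by simp
  qed
qed auto

definition nf_det_sexp :: "real \<Rightarrow> sexp" where
  "nf_det_sexp m = SMult (SConst (-1)) (SAdd (SMult (SConst (4 * of_real m))
     (SAdd (SAdd (SMult SXi1 SXi1) (SMult SXi1 SXi2)) (SMult SXi2 SXi2))) (SConst (3 * of_real m ^ 2)))"

lemma sval_nf_det_sexp: "sval F (nf_det_sexp m) x y = of_real (nf_det m x y)"
  by (simp add: nf_det_sexp_def nf_det_eq power2_eq_square algebra_simps)

lemma has_order_inverse_nf_det_sexp:
  assumes "0 < m"
  shows "has_order F (SInverse (nf_det_sexp m)) (-2)"
proof (rule has_order.inverse)
  show "has_order F (nf_det_sexp m) 2"
    by (rule has_order_spoly) (simp_all add: nf_det_sexp_def)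
  show "\<forall>x y. min (2*m) (3*m^2) * jbr2 x y powr 2 \<le> norm (sval F (nf_det_sexp m) x y)"
    using nf_det_bound[OF assms] by (simp add: sval_nf_det_sexp jbr2_powr_2)
qed (use assms in simp_all)

(* eN - eR vanishes on xi1 + xi2 = 0, so it is (xi1 + xi2) Q with Q of one order less. *)
lemma high_high_decomposition:
  assumes "0 < m" "symbol_derivs 0 F" "F 0 0 = (\<lambda>x y. of_real (chi x y))"
    and "spoly eN" "real (sdegree eN) \<le> s + 3" "spoly eR" "real (sdegree eR) \<le> s + 2"
    and "\<forall>x. sval F eN x (-x) = sval F eR x (-x)"
    and "\<forall>x y. f x y * of_real (nf_det m x y) = sval F eN x y"
  shows "\<exists>t h. S2 s t \<and> S2 s h \<and> (\<forall>x y. of_real (chi x y) * f x y = of_real (x + y) * t x y + h x y)"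
proof -
  define eE where "eE = SAdd eN (SMult (SConst (-1)) eR)"
  have "spoly eE" "has_order F eE (s + 3)"
    using assms(4-7) unfolding eE_def by (auto intro: has_order_spoly)
  then obtain Q R where Q': "has_order F Q (s + 3 - 1)"
    and E: "\<And>x y. sval F eE x y = of_real (x + y) * sval F Q x y + sval F R x y"
    and R: "\<And>x y. sval F R x y = sval F eE x (-x)"
    using spoly_antidiagonal_division by metis
  have Q: "has_order F Q (s + 2)"
    using has_order_mono[OF Q'] by simp
  have "sval F R x y = 0" for x y
    unfolding R eE_def using assms(8) by simp
  then have N: "sval F eN x y = of_real (x + y) * sval F Q x y + sval F eR x y" for x y
    using E[of x y] unfolding eE_def by (simp add: algebra_simps)
  define t where "t = SMult (SChi 0 0) (SMult Q (SInverse (nf_det_sexp m)))"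
  define h where "h = SMult (SChi 0 0) (SMult eR (SInverse (nf_det_sexp m)))"
  have "has_order F t s" "has_order F h s"
    unfolding t_def h_def using Q has_order_spoly[OF assms(6,7)] has_order_inverse_nf_det_sexp[OF assms(1)]
    by (auto intro!: has_order.mult[of F "SChi 0 0" 0] has_order.chi
        has_order.mult[of F Q "s + 2" "SInverse (nf_det_sexp m)" "-2"]
        has_order.mult[of F eR "s + 2" "SInverse (nf_det_sexp m)" "-2"])
  moreover have "of_real (chi x y) * f x y = of_real (x + y) * sval F t x y + sval F h x y" for x y
  proof -
    have "f x y = sval F eN x y / of_real (nf_det m x y)"
      using assms(9) nf_det_nonzero[OF assms(1), of x y] by (simp add: eq_divide_eq)
    then show ?thesis
      unfolding t_def h_def N by (simp add: assms(3) sval_nf_det_sexp divide_inverse algebra_simps)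
  qed
  ultimately show ?thesis
    using has_order_imp_S2[OF assms(2)] by blast
qed

definition ssquare :: "sexp \<Rightarrow> sexp" where
  "ssquare e = SMult e e"

(* xi^2 + m and 2 xi1 xi2 - m are omega(xi)^2 and omega(xi1+xi2)^2 - omega(xi1)^2 - omega(xi2)^2. *)
definition omega_sq_sexp :: "sexp \<Rightarrow> real \<Rightarrow> sexp" where
  "omega_sq_sexp X m = SAdd (ssquare X) (SConst (of_real m))"

definition phase_sexp :: "real \<Rightarrow> sexp" where
  "phase_sexp m = SAdd (SMult (SConst 2) (SMult SXi1 SXi2)) (SConst (- of_real m))"

definition span00_sexp :: "complex \<Rightarrow> complex \<Rightarrow> sexp" where
  "span00_sexp \<alpha>0 \<alpha>1 = SAdd (SConst \<alpha>0) (SMult (SConst (\<i> * \<alpha>1)) (SAdd SXi1 SXi2))"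

definition span11_sexp :: "complex \<Rightarrow> complex \<Rightarrow> complex \<Rightarrow> complex \<Rightarrow> complex \<Rightarrow> sexp" where
  "span11_sexp \<gamma>0 \<gamma>1 \<gamma>2 \<gamma>3 \<gamma>4 =
     SAdd (SAdd (SAdd (SAdd (SConst \<gamma>0) (SMult (SConst (\<i> * \<gamma>1)) (SAdd SXi1 SXi2)))
       (SMult (SConst \<gamma>2) (SMult SXi1 SXi2))) (SMult (SConst \<gamma>3) (SAdd (ssquare SXi1) (ssquare SXi2))))
       (SMult (SConst (\<i> * \<gamma>4)) (SMult (SMult SXi1 SXi2) (SAdd SXi1 SXi2)))"

definition span01_sexp :: "sexp \<Rightarrow> sexp \<Rightarrow> complex \<Rightarrow> complex \<Rightarrow> complex \<Rightarrow> complex \<Rightarrow> complex \<Rightarrow> sexp" where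
  "span01_sexp X Y \<beta>0 \<beta>1 \<beta>2 \<beta>3 \<beta>4 =
     SAdd (SAdd (SAdd (SAdd (SConst \<beta>0) (SMult (SConst (\<i> * \<beta>1)) X)) (SMult (SConst (\<i> * \<beta>2)) Y))
       (SMult (SConst \<beta>3) (SMult X Y))) (SMult (SConst \<beta>4) (ssquare Y))"

lemmas sexp_defs = ssquare_def omega_sq_sexp_def phase_sexp_def span00_sexp_def span11_sexp_def
  span01_sexp_def

(* In each case eR is eN restricted to xi2 = -xi1, written as a polynomial in xi1. *)
lemma nf_a_high_high:
  assumes "0 < m" "symbol_derivs 0 F" "F 0 0 = (\<lambda>x y. of_real (chi x y))"
    and "\<forall>x y. q00 x y = \<alpha>0 + \<alpha>1 * (\<i> * of_real (x + y))"
    and "\<forall>x y. q11 x y = \<gamma>0 + \<gamma>1 * (\<i> * of_real (x + y)) + \<gamma>2 * of_real (x * y)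
                       + \<gamma>3 * of_real (x^2 + y^2) + \<gamma>4 * (\<i> * of_real (x^2 * y + x * y^2))"
  shows "\<exists>t h. S2 2 t \<and> S2 2 h \<and>
    (\<forall>x y. of_real (chi x y) * nf_a m q00 q11 x y = of_real (x + y) * t x y + h x y)"
proof -
  define eN where "eN = SAdd (SMult (SMult (SConst 2) (SMult (omega_sq_sexp SXi1 m) (omega_sq_sexp SXi2 m)))
      (span00_sexp \<alpha>0 \<alpha>1)) (SMult (SConst (-1)) (SMult (phase_sexp m) (span11_sexp \<gamma>0 \<gamma>1 \<gamma>2 \<gamma>3 \<gamma>4)))"
  define eR where "eR = SAdd (SMult (SMult (SConst (2 * \<alpha>0)) (omega_sq_sexp SXi1 m)) (omega_sq_sexp SXi1 m))
      (SMult (SAdd (SMult (SConst 2) (ssquare SXi1)) (SConst (of_real m)))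
        (SAdd (SConst \<gamma>0) (SMult (SConst (2 * \<gamma>3 - \<gamma>2)) (ssquare SXi1))))"
  have "\<forall>x y. nf_a m q00 q11 x y * of_real (nf_det m x y) = sval F eN x y"
    unfolding nf_a_mult_det[OF assms(1)] by (simp add: eN_def sexp_defs assms(4,5) power2_eq_square algebra_simps)
  moreover have "\<forall>x. sval F eN x (-x) = sval F eR x (-x)"
    by (simp add: eN_def eR_def sexp_defs power2_eq_square algebra_simps)
  ultimately show ?thesis
    by (intro high_high_decomposition[OF assms(1-3), where eN = eN and eR = eR])
      (simp_all add: eN_def eR_def sexp_defs)
qed

lemma nf_b_high_high:
  assumes "0 < m" "symbol_derivs 0 F" "F 0 0 = (\<lambda>x y. of_real (chi x y))"
    and "\<forall>x y. q00 x y = \<alpha>0 + \<alpha>1 * (\<i> * of_real (x + y))"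
    and "\<forall>x y. q11 x y = \<gamma>0 + \<gamma>1 * (\<i> * of_real (x + y)) + \<gamma>2 * of_real (x * y)
                       + \<gamma>3 * of_real (x^2 + y^2) + \<gamma>4 * (\<i> * of_real (x^2 * y + x * y^2))"
  shows "\<exists>t h. S2 0 t \<and> S2 0 h \<and>
    (\<forall>x y. of_real (chi x y) * nf_b m q00 q11 x y = of_real (x + y) * t x y + h x y)"
proof -
  define eN where "eN = SAdd (SMult (SConst 2) (span11_sexp \<gamma>0 \<gamma>1 \<gamma>2 \<gamma>3 \<gamma>4))
      (SMult (SConst (-1)) (SMult (phase_sexp m) (span00_sexp \<alpha>0 \<alpha>1)))"
  define eR where "eR = SAdd (SMult (SConst 2) (SAdd (SConst \<gamma>0) (SMult (SConst (2 * \<gamma>3 - \<gamma>2)) (ssquare SXi1))))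
      (SMult (SAdd (SMult (SConst 2) (ssquare SXi1)) (SConst (of_real m))) (SConst \<alpha>0))"
  have "\<forall>x y. nf_b m q00 q11 x y * of_real (nf_det m x y) = sval F eN x y"
    unfolding nf_b_mult_det[OF assms(1)] by (simp add: eN_def sexp_defs assms(4,5) power2_eq_square algebra_simps)
  moreover have "\<forall>x. sval F eN x (-x) = sval F eR x (-x)"
    by (simp add: eN_def eR_def sexp_defs power2_eq_square algebra_simps)
  ultimately show ?thesis
    by (intro high_high_decomposition[OF assms(1-3), where eN = eN and eR = eR])
      (simp_all add: eN_def eR_def sexp_defs)
qed

lemma nf_c_high_high:
  assumes "0 < m" "symbol_derivs 0 F" "F 0 0 = (\<lambda>x y. of_real (chi x y))"
    and "\<forall>x y. q01 x y = \<beta>0 + \<beta>1 * (\<i> * of_real x) + \<beta>2 * (\<i> * of_real y)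
                       + \<beta>3 * of_real (x * y) + \<beta>4 * of_real (y^2)"
  shows "\<exists>t h. S2 1 t \<and> S2 1 h \<and>
    (\<forall>x y. of_real (chi x y) * nf_c m q01 x y = of_real (x + y) * t x y + h x y)"
proof -
  define eN where "eN = SAdd (SMult (SConst (-1)) (SMult (phase_sexp m) (span01_sexp SXi1 SXi2 \<beta>0 \<beta>1 \<beta>2 \<beta>3 \<beta>4)))
      (SMult (SMult (SConst (-2)) (omega_sq_sexp SXi2 m)) (span01_sexp SXi2 SXi1 \<beta>0 \<beta>1 \<beta>2 \<beta>3 \<beta>4))"
  define eR where "eR = SAdd (SAdd (SAdd (SMult (SConst (4 * \<i> * (\<beta>1 - \<beta>2))) (SMult (ssquare SXi1) SXi1))
      (SMult (SConst (- of_real m * (\<beta>4 - \<beta>3))) (ssquare SXi1)))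
      (SMult (SConst (3 * of_real m * \<i> * (\<beta>1 - \<beta>2))) SXi1)) (SConst (- of_real m * \<beta>0))"
  have "\<forall>x y. nf_c m q01 x y * of_real (nf_det m x y) = sval F eN x y"
    unfolding nf_c_mult_det[OF assms(1)] by (simp add: eN_def sexp_defs assms(4) power2_eq_square algebra_simps)
  moreover have "\<forall>x. sval F eN x (-x) = sval F eR x (-x)"
    by (simp add: eN_def eR_def sexp_defs power2_eq_square algebra_simps)
  ultimately show ?thesis
    by (intro high_high_decomposition[OF assms(1-3), where eN = eN and eR = eR])
      (simp_all add: eN_def eR_def sexp_defs)
qed

theorem proposition3p1:
  fixes m :: real and q00 q01 q11 :: symb and chi :: "real \<Rightarrow> real \<Rightarrow> real"
  assumes m_pos: "0 < m"
    and q00_span: "\<exists>\<alpha>0 \<alpha>1 :: complex. \<forall>x y.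
           q00 x y = \<alpha>0 + \<alpha>1 * (\<i> * of_real (x + y))"
    and q01_span: "\<exists>\<beta>0 \<beta>1 \<beta>2 \<beta>3 \<beta>4 :: complex. \<forall>x y.
           q01 x y = \<beta>0 + \<beta>1 * (\<i> * of_real x) + \<beta>2 * (\<i> * of_real y)
                     + \<beta>3 * of_real (x * y) + \<beta>4 * of_real (y^2)"
    and q11_span: "\<exists>\<gamma>0 \<gamma>1 \<gamma>2 \<gamma>3 \<gamma>4 :: complex. \<forall>x y.
           q11 x y = \<gamma>0 + \<gamma>1 * (\<i> * of_real (x + y)) + \<gamma>2 * of_real (x * y)
                     + \<gamma>3 * of_real (x^2 + y^2) + \<gamma>4 * (\<i> * of_real (x^2 * y + x * y^2))"
    and q00_sym: "sym_symb q00" and q11_sym: "sym_symb q11"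
    and q_real: "real_symb q00" "real_symb q01" "real_symb q11"
    and chi_hh: "is_chi_hh chi"
  shows "\<exists>a b c. is_normal_form m q00 q01 q11 a b c
     \<and> (\<forall>a' b' c'. is_normal_form m q00 q01 q11 a' b' c' \<longrightarrow> a' = a \<and> b' = b \<and> c' = c)
     \<and> (\<exists>c0 > 0.
          (\<exists>a0 a1 K. S1 2 a0 \<and> S1 3 a1 \<and>
             (\<forall>x y. \<bar>x\<bar> \<le> c0 * \<bar>y\<bar> \<and> y \<noteq> 0 \<longrightarrow>
                norm (a x y - a0 x * of_real y - a1 x) \<le> K * (1 + \<bar>x\<bar>^4) / \<bar>y\<bar>))
        \<and> (\<exists>b0 b1 K. S1 1 b0 \<and> S1 2 b1 \<and>
             (\<forall>x y. \<bar>x\<bar> \<le> c0 * \<bar>y\<bar> \<and> y \<noteq> 0 \<longrightarrow>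
                norm (b x y - b0 x - b1 x / of_real y) \<le> K * (1 + \<bar>x\<bar>^3) / y^2))
        \<and> (\<exists>c10 c11 K. S1 1 c10 \<and> S1 2 c11 \<and>
             (\<forall>x y. \<bar>x\<bar> \<le> c0 * \<bar>y\<bar> \<and> y \<noteq> 0 \<longrightarrow>
                norm (c x y - c10 x * of_real y - c11 x) \<le> K * (1 + \<bar>x\<bar>^3) / \<bar>y\<bar>))
        \<and> (\<exists>c20 c21 K. S1 2 c20 \<and> S1 3 c21 \<and>
             (\<forall>x y. \<bar>y\<bar> \<le> c0 * \<bar>x\<bar> \<and> x \<noteq> 0 \<longrightarrow>
                norm (c x y - c20 y - c21 y / of_real x) \<le> K * (1 + \<bar>y\<bar>^4) / x^2)))
     \<and> (\<exists>at' ahh0 :: symb. S2 2 at' \<and> S2 2 ahh0 \<and>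
          (\<forall>x y. of_real (chi x y) * a x y = of_real (x + y) * at' x y + ahh0 x y))
     \<and> (\<exists>bt' bhh0 :: symb. S2 0 bt' \<and> S2 0 bhh0 \<and>
          (\<forall>x y. of_real (chi x y) * b x y = of_real (x + y) * bt' x y + bhh0 x y))
     \<and> (\<exists>ct' chh0 :: symb. S2 1 ct' \<and> S2 1 chh0 \<and>
          (\<forall>x y. of_real (chi x y) * c x y = of_real (x + y) * ct' x y + chh0 x y))"
proof -
  obtain \<alpha>0 \<alpha>1 \<beta>0 \<beta>1 \<beta>2 \<beta>3 \<beta>4 \<gamma>0 \<gamma>1 \<gamma>2 \<gamma>3 \<gamma>4 where
    q00: "\<forall>x y. q00 x y = \<alpha>0 + \<alpha>1 * (\<i> * of_real (x + y))"
    and q01: "\<forall>x y. q01 x y = \<beta>0 + \<beta>1 * (\<i> * of_real x) + \<beta>2 * (\<i> * of_real y)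
                              + \<beta>3 * of_real (x * y) + \<beta>4 * of_real (y^2)"
    and q11: "\<forall>x y. q11 x y = \<gamma>0 + \<gamma>1 * (\<i> * of_real (x + y)) + \<gamma>2 * of_real (x * y)
                              + \<gamma>3 * of_real (x^2 + y^2) + \<gamma>4 * (\<i> * of_real (x^2 * y + x * y^2))"
    using q00_span q01_span q11_span by metis
  obtain F where F: "symbol_derivs 0 F" "F 0 0 = (\<lambda>x y. of_real (chi x y))"
    using chi_hh unfolding is_chi_hh_def S2_iff_symbol_derivs by metis
  note normal_form = is_normal_form_iff[OF m_pos q00_sym q11_sym q_real]
  note low_high =
    low_high_expansion[OF m_pos nf_a_long_division[OF m_pos q00 q11]]
    low_high_expansion_divided[OF m_pos nf_b_long_division[OF m_pos q00 q11]]
    low_high_expansion[OF m_pos nf_c_long_division[OF m_pos q01]]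
    low_high_expansion_divided[OF m_pos nf_c_swap_long_division[OF m_pos q01]]
  note high_high =
    nf_a_high_high[OF m_pos F q00 q11] nf_b_high_high[OF m_pos F q00 q11] nf_c_high_high[OF m_pos F q01]
  (* The expansions hold for every nonzero xi2 (resp. xi1), so c0 = 1 will do. *)
  show ?thesis
    apply (rule exI[of _ "nf_a m q00 q11"], rule exI[of _ "nf_b m q00 q11"], rule exI[of _ "nf_c m q01"])
    apply (intro conjI exI[of _ "1::real"] zero_less_one)
    using normal_form apply blast
    using normal_form apply blast
    using low_high(1) apply blast
    using low_high(2) apply blast
    using low_high(3) apply blast
    using low_high(4) apply blast
    using high_high(1) apply blast
    using high_high(2) apply blast
    using high_high(3) apply blast
    done
qed

end
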